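(* Assume $(A_1)$ and $(A_2)$. If $\bar x\in D$ minimizes $J$ over $D$, i.e. $\bar x$ solves $$\min\int_0^T L\big(t,x(t),x(t-\tau_1),\dot x(t),\dot x(t-\tau_2)\big)dt\quad\text{subject to } x|_{I_1}=\theta_1,\ x|_{I_2}=\theta_2,\ x(T)=\alpha,\ x\in\mathcal{H},$$ then, writing $\partial_iL[\bar x](t)=\partial_iL\big(t,\bar x(t),\bar x(t-\tau_1),\dot{\bar x}(t),\dot{\bar x}(t-\tau_2)\big)$, $$\begin{cases}\frac{d}{dt}\big\{\partial_4L[\bar x](t)+\partial_5L[\bar x](t+\tau_2)\big\}=\partial_2L[\bar x](t)+\partial_3L[\bar x](t+\tau_1), & \text{a.e. } t\in[0,T-\tau_1],\\[2pt] \frac{d}{dt}\big\{\partial_4L[\bar x](t)+\partial_5L[\bar x](t+\tau_2)\big\}=\partial_2L[\bar x](t), & \text{a.e. } t\in\,]T-\tau_1,T-\tau_2],\\[2pt] \frac{d}{dt}\partial_4L[\bar x](t)=\partial_2L[\bar x](t), & \text{a.e. } t\in\,]T-\tau_2,T].\end{cases}$$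
   Context: Fix $N\ge 1$, $T>0$ and $0<\tau_2<\tau_1<T$; $I=[0,T]$, $I_1=[-\tau_1,-\tau_2]$, $I_2=[-\tau_2,0]$. $\mathcal{H}$ is the Hilbert space of functions $x:[-\tau_1,T]\to\mathbb{R}^N$ with $x|_{I_1}\in L^2(I_1,\mathbb{R}^N)$, $x|_{I_2}\in H^1(I_2,\mathbb{R}^N)$, $x|_I\in H^1(I,\mathbb{R}^N)$, normed by $\|x\|_{\mathcal{H}}=\big(\|x|_{I_1}\|^2_{L^2}+\|x|_{I_2}\|^2_{H^1}+\|x|_I\|^2_{H^1}\big)^{1/2}$. $\theta_1:I_1\to\mathbb{R}^N$, $\theta_2:I_2\to\mathbb{R}^N$ are given piecewise smooth functions, $\alpha\in\mathbb{R}^N$, and $D=\{x\in\mathcal{H}: x|_{I_1}=\theta_1,\ x|_{I_2}=\theta_2,\ x(T)=\alpha\}$. $J(x)=\int_0^T L(t,x(t),x(t-\tau_1),\dot x(t),\dot x(t-\tau_2))dt$. The Lagrangian is $L:[0,T]\times\mathbb{R}^{4N}\to\mathbb{R}$, $(t,a,\bar a,b,\bar b)\mapsto L(t,a,\bar a,b,\bar b)$; $\partial_iL$ is its partial derivative with respect to its $i$-th argument. Assumptions: $(A_1)$ $L$ is $C^1$ in $(a,\bar a,b,\bar b)$ for a.e. $t$ and measurable in $t$ for every $(a,\bar a,b,\bar b)$; $(A_2)$ there exist $\gamma_i\in L^2(I,\mathbb{R}^+)$, $i=1,\dots,5$, with $|L|\le\gamma_1(t)$ and $\|\partial_iL\|\le\gamma_i(t)$,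 $i=2,\dots,5$, for a.e. $t\in I$ and all arguments. Derivatives $\frac{d}{dt}$ are understood in the weak sense, the equations holding almost everywhere. *)

theory Defs
  imports "HOL-Analysis.Analysis"
begin

definition L2_on :: "real set \<Rightarrow> (real \<Rightarrow> 'a::euclidean_space) \<Rightarrow> bool" where
  "L2_on S f \<longleftrightarrow> f \<in> borel_measurable (lebesgue_on S)
      \<and> integrable (lebesgue_on S) (\<lambda>t. (norm (f t))^2)"

definition test_function :: "real \<Rightarrow> real \<Rightarrow> (real \<Rightarrow> real) \<Rightarrow> bool" where
  "test_function a b \<phi> \<longleftrightarrow>
     (\<forall>k t. ((deriv ^^ k) \<phi>) differentiable (at t))
     \<and> (\<exists>c d. a < c \<and> c \<le> d \<and> d < b \<and> (\<forall>t. t \<notin> {c..d} \<longrightarrow> \<phi> t = 0))"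

definition has_weak_deriv_on ::
  "real \<Rightarrow> real \<Rightarrow> (real \<Rightarrow> 'a::euclidean_space) \<Rightarrow> (real \<Rightarrow> 'a) \<Rightarrow> bool" where
  "has_weak_deriv_on a b f g \<longleftrightarrow>
     (\<forall>c d. a < c \<and> d < b \<longrightarrow> set_integrable lebesgue {c..d} f \<and> set_integrable lebesgue {c..d} g)
     \<and> (\<forall>\<phi>. test_function a b \<phi> \<longrightarrow>
          (LINT t:{a<..<b}|lebesgue. deriv \<phi> t *\<^sub>R f t)
          = - (LINT t:{a<..<b}|lebesgue. \<phi> t *\<^sub>R g t))"

text \<open>H^1 on [a,b], elements identified with their continuous representative.\<close>
definition H1_on :: "real \<Rightarrow> real \<Rightarrow> (real \<Rightarrow> 'a::euclidean_space) \<Rightarrow> bool" where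
  "H1_on a b x \<longleftrightarrow> continuous_on {a..b} x \<and> L2_on {a..b} x
      \<and> (\<exists>g. L2_on {a..b} g \<and> has_weak_deriv_on a b x g)"

text \<open>The space \<H>: L^2 on I1 = [-tau1,-tau2], H^1 on I2 = [-tau2,0] and on I = [0,T].\<close>
definition HH :: "real \<Rightarrow> real \<Rightarrow> real \<Rightarrow> (real \<Rightarrow> 'a::euclidean_space) \<Rightarrow> bool" where
  "HH \<tau>1 \<tau>2 T x \<longleftrightarrow> L2_on {-\<tau>1..-\<tau>2} x \<and> H1_on (-\<tau>2) 0 x \<and> H1_on 0 T x"

definition is_xdot :: "real \<Rightarrow> real \<Rightarrow> (real \<Rightarrow> 'a::euclidean_space) \<Rightarrow> (real \<Rightarrow> 'a) \<Rightarrow> bool" where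
  "is_xdot \<tau>2 T x xd \<longleftrightarrow> has_weak_deriv_on (-\<tau>2) 0 x xd \<and> has_weak_deriv_on 0 T x xd"

definition Dset :: "real \<Rightarrow> real \<Rightarrow> real \<Rightarrow> (real \<Rightarrow> 'a::euclidean_space) \<Rightarrow> (real \<Rightarrow> 'a)
    \<Rightarrow> 'a \<Rightarrow> (real \<Rightarrow> 'a) set" where
  "Dset \<tau>1 \<tau>2 T \<theta>1 \<theta>2 \<alpha> = {x. HH \<tau>1 \<tau>2 T x
      \<and> (\<forall>t\<in>{-\<tau>1..<-\<tau>2}. x t = \<theta>1 t) \<and> (\<forall>t\<in>{-\<tau>2..0}. x t = \<theta>2 t) \<and> x T = \<alpha>}"

text \<open>The functional J, evaluated with a (weak) derivative xd of x.\<close>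
definition Jfun :: "(real \<Rightarrow> 'a \<Rightarrow> 'a \<Rightarrow> 'a \<Rightarrow> 'a \<Rightarrow> real) \<Rightarrow> real \<Rightarrow> real \<Rightarrow> real
    \<Rightarrow> (real \<Rightarrow> 'a::euclidean_space) \<Rightarrow> (real \<Rightarrow> 'a) \<Rightarrow> real" where
  "Jfun L \<tau>1 \<tau>2 T x xd = (LINT t:{0..T}|lebesgue. L t (x t) (x (t - \<tau>1)) (xd t) (xd (t - \<tau>2)))"

text \<open>A function of the Lagrangian's arguments evaluated along (x, xd): F[x](t).\<close>
definition along :: "(real \<Rightarrow> 'a \<Rightarrow> 'a \<Rightarrow> 'a \<Rightarrow> 'a \<Rightarrow> 'b) \<Rightarrow> real \<Rightarrow> real
    \<Rightarrow> (real \<Rightarrow> 'a) \<Rightarrow> (real \<Rightarrow> 'a) \<Rightarrow> real \<Rightarrow> 'b" where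
  "along F \<tau>1 \<tau>2 x xd t = F t (x t) (x (t - \<tau>1)) (xd t) (xd (t - \<tau>2))"

end

theory Submission
  imports Defs
begin

(*
  Let xb minimize J over D and let phi be a C^1 function supported in a
  compact subinterval of (0, T).  For every vector e and every s, xb + s phi e is again
  admissible, so s = 0 minimizes the real function s |-> J (xb + s phi e).  Differentiating under
  the integral sign (dominated by the functions gamma_i of (A2)) gives the integrated
  Euler-Lagrange equation
      int_0^T  phi L2[xb] + phi(t - tau1) L3[xb] + phi' L4[xb] + phi'(t - tau2) L5[xb]  dt = 0.
  Extend the partial derivatives along xb by zero outside [0, T] and substitute s = t - tau in
  the delayed terms: the equation says that L4[xb](t) + L5[xb](t + tau2) has the weak derivative
  L2[xb](t) + L3[xb](t + tau1) on every subinterval of (0, T), where terms evaluated beyond T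
  vanish.  On the three intervals of the theorem the zero extensions reduce to the stated
  functions.
*)

lemma lebesgue_on_measurable_iff:
  fixes f :: "real \<Rightarrow> 'b::euclidean_space"
  assumes "S \<in> sets lebesgue"
  shows "f \<in> borel_measurable (lebesgue_on S) \<longleftrightarrow> (\<lambda>x. indicator S x *\<^sub>R f x) \<in> borel_measurable lebesgue"
  by (rule borel_measurable_restrict_space_iff) (use assms in auto)

text \<open>Lebesgue measure is complete: changing a measurable function on a null set keeps it measurable,
  and so does passing to an almost everywhere limit.\<close>
lemma lebesgue_on_measurable_AE_cong:
  fixes f g :: "real \<Rightarrow> 'b::euclidean_space"
  assumes S: "S \<in> sets lebesgue" and f: "f \<in> borel_measurable (lebesgue_on S)"
    and ae: "AE x in lebesgue_on S. f x = g x"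
  shows "g \<in> borel_measurable (lebesgue_on S)"
proof -
  have "AE x in lebesgue. x \<in> S \<longrightarrow> f x = g x"
    using ae by (subst (asm) AE_restrict_space_iff) (use S in auto)
  then have "AE x in lebesgue. indicator S x *\<^sub>R f x = indicator S x *\<^sub>R g x"
    by eventually_elim (auto simp: indicator_def)
  moreover have "(\<lambda>x. indicator S x *\<^sub>R f x) \<in> borel_measurable lebesgue"
    using f S by (simp add: lebesgue_on_measurable_iff)
  ultimately have "(\<lambda>x. indicator S x *\<^sub>R g x) \<in> borel_measurable lebesgue"
    by (rule borel_measurable_AE[rotated])
  then show ?thesis using S by (simp add: lebesgue_on_measurable_iff)
qed

lemma lebesgue_on_measurable_AE_limit:
  fixes f :: "nat \<Rightarrow> real \<Rightarrow> 'b::euclidean_space"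
  assumes S: "S \<in> sets lebesgue" and f: "\<And>i. f i \<in> borel_measurable (lebesgue_on S)"
    and lim: "AE x in lebesgue_on S. (\<lambda>i. f i x) \<longlonglongrightarrow> g x"
  shows "g \<in> borel_measurable (lebesgue_on S)"
proof (rule lebesgue_on_measurable_AE_cong[OF S])
  show "(\<lambda>x. lim (\<lambda>i. f i x)) \<in> borel_measurable (lebesgue_on S)"
    using f by (rule borel_measurable_lim_metric)
  show "AE x in lebesgue_on S. lim (\<lambda>i. f i x) = g x"
    using lim by eventually_elim (rule limI)
qed

lemma lebesgue_on_measurable_Un:
  fixes f :: "real \<Rightarrow> 'b::euclidean_space"
  assumes S: "S \<in> sets lebesgue" and A: "A \<in> sets lebesgue"
    and fS: "f \<in> borel_measurable (lebesgue_on S)" and fA: "f \<in> borel_measurable (lebesgue_on A)"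
  shows "f \<in> borel_measurable (lebesgue_on (S \<union> A))"
proof (rule measurable_piecewise_restrict[where C = "{S, A}"])
  fix \<Omega> assume \<Omega>: "\<Omega> \<in> {S, A}"
  then have eq: "restrict_space (lebesgue_on (S \<union> A)) \<Omega> = lebesgue_on \<Omega>"
    using S A by (auto simp: restrict_restrict_space Int_absorb1)
  show "f \<in> borel_measurable (restrict_space (lebesgue_on (S \<union> A)) \<Omega>)"
    unfolding eq using \<Omega> fS fA by auto
  show "\<Omega> \<inter> space (lebesgue_on (S \<union> A)) \<in> sets (lebesgue_on (S \<union> A))"
    using \<Omega> S A by (auto simp: sets_restrict_space_iff)
qed auto

lemma lebesgue_on_measurable_shift:
  fixes f :: "real \<Rightarrow> 'b::euclidean_space"
  assumes S: "S \<in> sets lebesgue" and S': "S' \<in> sets lebesgue"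
    and f: "f \<in> borel_measurable (lebesgue_on S)" and shift: "\<And>t. t \<in> S' \<longleftrightarrow> t + c \<in> S"
  shows "(\<lambda>t. f (t + c)) \<in> borel_measurable (lebesgue_on S')"
proof -
  have "(\<lambda>x. indicator S x *\<^sub>R f x) \<in> borel_measurable lebesgue"
    using f S by (simp add: lebesgue_on_measurable_iff)
  from borel_measurable_affine[OF this, of 1 c]
  have "(\<lambda>x. indicator S (c + x) *\<^sub>R f (c + x)) \<in> borel_measurable lebesgue" by simp
  moreover have "(\<lambda>x. indicator S (c + x) *\<^sub>R f (c + x)) = (\<lambda>x. indicator S' x *\<^sub>R f (x + c))"
    using shift by (auto simp: indicator_def add.commute)
  ultimately show ?thesis using S' by (simp add: lebesgue_on_measurable_iff)
qed

lemma floor_grid_tendsto: "(\<lambda>n. real_of_int \<lfloor>real (Suc n) * x\<rfloor> / real (Suc n)) \<longlonglongrightarrow> x"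
proof (rule real_tendsto_sandwich[of "\<lambda>n. x - inverse (real (Suc n))" _ _ "\<lambda>n. x"])
  show "\<forall>\<^sub>F n in sequentially. x - inverse (real (Suc n)) \<le> real_of_int \<lfloor>real (Suc n) * x\<rfloor> / real (Suc n)"
  proof (intro always_eventually allI)
    fix n
    have "real (Suc n) * x - 1 \<le> real_of_int \<lfloor>real (Suc n) * x\<rfloor>" by linarith
    then have "(real (Suc n) * x - 1) / real (Suc n) \<le> real_of_int \<lfloor>real (Suc n) * x\<rfloor> / real (Suc n)"
      by (rule divide_right_mono) auto
    then show "x - inverse (real (Suc n)) \<le> real_of_int \<lfloor>real (Suc n) * x\<rfloor> / real (Suc n)"
      by (simp add: diff_divide_distrib inverse_eq_divide)
  qed
  show "\<forall>\<^sub>F n in sequentially. real_of_int \<lfloor>real (Suc n) * x\<rfloor> / real (Suc n) \<le> x"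
    by (intro always_eventually allI) (simp add: field_simps)
  show "(\<lambda>n. x - inverse (real (Suc n))) \<longlonglongrightarrow> x"
    using tendsto_diff[OF tendsto_const LIMSEQ_inverse_real_of_nat, of x] by simp
qed simp

lemma grid_approximation_tendsto:
  fixes z :: "'a::euclidean_space"
  shows "(\<lambda>n. \<Sum>b\<in>Basis. (real_of_int \<lfloor>real (Suc n) * (z \<bullet> b)\<rfloor> / real (Suc n)) *\<^sub>R b) \<longlonglongrightarrow> z"
proof -
  have "(\<lambda>n. \<Sum>b\<in>Basis. (real_of_int \<lfloor>real (Suc n) * (z \<bullet> b)\<rfloor> / real (Suc n)) *\<^sub>R b)
      \<longlonglongrightarrow> (\<Sum>b\<in>Basis. (z \<bullet> b) *\<^sub>R b)"
    by (intro tendsto_sum tendsto_scaleR floor_grid_tendsto tendsto_const)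
  then show ?thesis by (simp add: euclidean_representation)
qed

text \<open>Every test function on \<open>(a, b)\<close> is one, for some
  \<open>[c, d] \<subseteq> (a, b)\<close>; only this is used about test functions.\<close>
definition C1_supported :: "real \<Rightarrow> real \<Rightarrow> (real \<Rightarrow> real) \<Rightarrow> bool" where
  "C1_supported c d \<phi> \<longleftrightarrow> (\<forall>t. (\<phi> has_real_derivative deriv \<phi> t) (at t))
     \<and> continuous_on UNIV (deriv \<phi>) \<and> (\<forall>t. t \<notin> {c..d} \<longrightarrow> \<phi> t = 0)"

lemma test_function_C1_supported:
  assumes "test_function a b \<phi>"
  obtains c d where "a < c" "c \<le> d" "d < b" "C1_supported c d \<phi>"
proof -
  have diff: "\<And>k t. ((deriv ^^ k) \<phi>) differentiable (at t)"
    and supp: "\<exists>c d. a < c \<and> c \<le> d \<and> d < b \<and> (\<forall>t. t \<notin> {c..d} \<longrightarrow> \<phi> t = 0)"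
    using assms unfolding test_function_def by blast+
  have "(\<phi> has_real_derivative deriv \<phi> t) (at t)" for t
    using diff[of 0 t] by (simp add: DERIV_deriv_iff_real_differentiable)
  moreover have "continuous_on UNIV (deriv \<phi>)"
    using diff[of 1] by (simp add: continuous_at_imp_continuous_on differentiable_imp_continuous_within)
  ultimately show ?thesis using supp that unfolding C1_supported_def by blast
qed

lemma C1_supported_deriv: "C1_supported c d \<phi> \<Longrightarrow> (\<phi> has_real_derivative deriv \<phi> t) (at t)"
  unfolding C1_supported_def by blast

lemma C1_supported_continuous:
  assumes "C1_supported c d \<phi>"
  shows "continuous_on UNIV \<phi>" "continuous_on UNIV (deriv \<phi>)"
  using assms unfolding C1_supported_def
  by (meson DERIV_isCont continuous_at_imp_continuous_on)+

lemma C1_supported_vanishes: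
  assumes \<phi>: "C1_supported c d \<phi>" and t: "t \<notin> {c..d}"
  shows "\<phi> t = 0" "deriv \<phi> t = 0"
proof -
  show "\<phi> t = 0" using \<phi> t unfolding C1_supported_def by blast
  have "((\<lambda>_. 0) has_real_derivative deriv \<phi> t) (at t)"
    by (rule has_field_derivative_transform_within_open[OF C1_supported_deriv[OF \<phi>], of "- {c..d}"])
      (use \<phi> t in \<open>auto simp: C1_supported_def\<close>)
  then show "deriv \<phi> t = 0" using DERIV_const DERIV_unique by blast
qed

lemma bounded_if_vanishing_outside:
  fixes f :: "real \<Rightarrow> real"
  assumes "continuous_on UNIV f" "\<And>t. t \<notin> {c..d} \<Longrightarrow> f t = 0"
  obtains K where "\<And>t. \<bar>f t\<bar> \<le> K"
proof -
  have "compact (f ` {c..d})"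
    using assms(1) by (intro compact_continuous_image) (auto intro: continuous_on_subset)
  then obtain K where K: "\<forall>x\<in>f ` {c..d}. norm x \<le> K"
    using compact_imp_bounded bounded_iff by blast
  have "\<bar>f t\<bar> \<le> max K 0" for t
  proof (cases "t \<in> {c..d}")
    case True
    then have "norm (f t) \<le> K" using K by blast
    then show ?thesis by simp
  qed (simp add: assms(2))
  then show ?thesis using that by blast
qed

lemma C1_supported_bounded:
  assumes \<phi>: "C1_supported c d \<phi>"
  obtains K where "\<And>t. \<bar>\<phi> t\<bar> \<le> K" "\<And>t. \<bar>deriv \<phi> t\<bar> \<le> K"
proof -
  obtain K1 where "\<And>t. \<bar>\<phi> t\<bar> \<le> K1"
    using bounded_if_vanishing_outside[OF C1_supported_continuous(1)[OF \<phi>]] C1_supported_vanishes(1)[OF \<phi>]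
    by blast
  moreover obtain K2 where "\<And>t. \<bar>deriv \<phi> t\<bar> \<le> K2"
    using bounded_if_vanishing_outside[OF C1_supported_continuous(2)[OF \<phi>]] C1_supported_vanishes(2)[OF \<phi>]
    by blast
  ultimately show ?thesis using that[of "max K1 K2"] by (meson max.coboundedI1 max.coboundedI2 order_trans)
qed

lemma continuous_measurable_lebesgue:
  fixes f :: "real \<Rightarrow> real"
  assumes "continuous_on UNIV f"
  shows "f \<in> borel_measurable lebesgue"
  using continuous_imp_measurable_on_sets_lebesgue[OF assms] by (simp add: lebesgue_on_UNIV_eq)

text \<open>Superposition of a Caratheodory function (measurable in \<open>t\<close>, continuous in \<open>z\<close> for almost
  every \<open>t\<close>) with a measurable function is measurable: approximate \<open>u\<close> by grid-valued functions.\<close>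
lemma measurable_superposition:
  fixes F :: "real \<Rightarrow> 'a::euclidean_space \<Rightarrow> 'b::euclidean_space"
  assumes S: "S \<in> sets lebesgue"
    and meas: "\<And>z. (\<lambda>t. F t z) \<in> borel_measurable (lebesgue_on S)"
    and cont: "AE t in lebesgue_on S. continuous_on UNIV (F t)"
    and u: "u \<in> borel_measurable (lebesgue_on S)"
  shows "(\<lambda>t. F t (u t)) \<in> borel_measurable (lebesgue_on S)"
proof -
  define Q where "Q n k = (\<Sum>b\<in>Basis. (real_of_int (k b) / real (Suc n)) *\<^sub>R b)" for n and k :: "'a \<Rightarrow> int"
  define K where "K n t = restrict (\<lambda>b. \<lfloor>real (Suc n) * (u t \<bullet> b)\<rfloor>) Basis" for n t
  define I where "I = PiE (Basis::'a set) (\<lambda>_. UNIV::int set)"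
  have cI: "countable I" unfolding I_def by (rule countable_PiE) auto
  have grid_measurable: "(\<lambda>t. F t (Q n (K n t))) \<in> borel_measurable (lebesgue_on S)" for n
  proof (rule measurable_compose_countable'[where I=I])
    show "(\<lambda>t. F t (Q n k)) \<in> borel_measurable (lebesgue_on S)" for k by (rule meas)
    show "K n \<in> lebesgue_on S \<rightarrow>\<^sub>M count_space I"
    proof (subst measurable_count_space_eq_countable[OF cI], intro conjI ballI)
      show "K n \<in> space (lebesgue_on S) \<rightarrow> I" unfolding K_def I_def by auto
      fix k assume k: "k \<in> I"
      have [measurable]: "(\<lambda>t. real (Suc n) * (u t \<bullet> b)) \<in> borel_measurable (lebesgue_on S)" for b
        using u by (intro borel_measurable_times borel_measurable_inner borel_measurable_const) auto
      have "K n t = k \<longleftrightarrow> (\<forall>b\<in>Basis. real_of_int (k b) \<le> real (Suc n) * (u t \<bullet> b)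
                          \<and> real (Suc n) * (u t \<bullet> b) < real_of_int (k b) + 1)" for t
        using k unfolding K_def I_def
        by (auto simp: PiE_iff extensional_def restrict_def fun_eq_iff floor_eq_iff)
      then have "K n -` {k} \<inter> space (lebesgue_on S) = {t \<in> space (lebesgue_on S). \<forall>b\<in>Basis.
          real_of_int (k b) \<le> real (Suc n) * (u t \<bullet> b) \<and> real (Suc n) * (u t \<bullet> b) < real_of_int (k b) + 1}"
        by blast
      also have "\<dots> \<in> sets (lebesgue_on S)" by measurable
      finally show "K n -` {k} \<inter> space (lebesgue_on S) \<in> sets (lebesgue_on S)" .
    qed
  qed (rule cI)
  have "AE t in lebesgue_on S. (\<lambda>n. F t (Q n (K n t))) \<longlonglongrightarrow> F t (u t)"
    using cont
  proof eventually_elim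
    case (elim t)
    have "(\<lambda>n. Q n (K n t)) = (\<lambda>n. \<Sum>b\<in>Basis. (real_of_int \<lfloor>real (Suc n) * (u t \<bullet> b)\<rfloor> / real (Suc n)) *\<^sub>R b)"
      unfolding Q_def K_def by (intro ext sum.cong refl) simp
    then have "(\<lambda>n. Q n (K n t)) \<longlonglongrightarrow> u t" using grid_approximation_tendsto by simp
    moreover have "isCont (F t) (u t)" using elim by (simp add: continuous_on_eq_continuous_at)
    ultimately show ?case by (rule isCont_tendsto_compose[rotated])
  qed
  then show ?thesis by (rule lebesgue_on_measurable_AE_limit[OF S grid_measurable])
qed

lemma L2_on_cong:
  assumes "L2_on S f" "\<And>x. x \<in> S \<Longrightarrow> f x = g x"
  shows "L2_on S g"
proof -
  have "g \<in> borel_measurable (lebesgue_on S)"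
    using assms measurable_cong[of "lebesgue_on S" f g] unfolding L2_on_def by simp
  moreover have "integrable (lebesgue_on S) (\<lambda>t. (norm (g t))^2)"
    using assms Bochner_Integration.integrable_cong[of "lebesgue_on S" "lebesgue_on S" "\<lambda>t. (norm (f t))^2" "\<lambda>t. (norm (g t))^2"]
    unfolding L2_on_def by simp
  ultimately show ?thesis unfolding L2_on_def by blast
qed

lemma square_norm_add_le:
  fixes a b :: "'a::real_normed_vector"
  shows "(norm (a + b))^2 \<le> 2 * (norm a)^2 + 2 * (norm b)^2"
proof -
  have "(norm (a + b))^2 \<le> (norm a + norm b)^2"
    by (intro power_mono norm_triangle_ineq) auto
  also have "\<dots> = 2 * (norm a)^2 + 2 * (norm b)^2 - (norm a - norm b)^2"
    by (simp add: power2_eq_square algebra_simps)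
  also have "\<dots> \<le> 2 * (norm a)^2 + 2 * (norm b)^2"
    by simp
  finally show ?thesis .
qed

lemma L2_on_add:
  fixes f g :: "real \<Rightarrow> 'a::euclidean_space"
  assumes f: "L2_on S f" and g: "L2_on S g"
  shows "L2_on S (\<lambda>t. f t + g t)"
proof -
  have m: "(\<lambda>t. f t + g t) \<in> borel_measurable (lebesgue_on S)"
    using f g unfolding L2_on_def by (intro borel_measurable_add) auto
  have "integrable (lebesgue_on S) (\<lambda>t. 2 * (norm (f t))^2 + 2 * (norm (g t))^2)"
    using f g unfolding L2_on_def by (intro Bochner_Integration.integrable_add integrable_mult_right) auto
  then have "integrable (lebesgue_on S) (\<lambda>t. (norm (f t + g t))^2)"
    by (rule Bochner_Integration.integrable_bound) (use m square_norm_add_le in auto)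
  with m show ?thesis unfolding L2_on_def by blast
qed

lemma L2_on_continuous:
  fixes f :: "real \<Rightarrow> 'a::euclidean_space"
  assumes "continuous_on {a..b} f"
  shows "L2_on {a..b} f"
proof -
  have "continuous_on {a..b} (\<lambda>t. (norm (f t))^2)"
    using assms by (intro continuous_intros)
  then have "set_integrable lebesgue {a..b} (\<lambda>t. (norm (f t))^2)"
    by (rule absolutely_integrable_continuous_real)
  then have "integrable (lebesgue_on {a..b}) (\<lambda>t. (norm (f t))^2)"
    unfolding set_integrable_def by (subst integrable_restrict_space) auto
  moreover have "f \<in> borel_measurable (lebesgue_on {a..b})"
    using assms by (intro continuous_imp_measurable_on_sets_lebesgue) auto
  ultimately show ?thesis unfolding L2_on_def by blast
qed

lemma L2_on_integrable:
  fixes g :: "real \<Rightarrow> 'a::euclidean_space"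
  assumes "L2_on {a..b} g"
  shows "integrable (lebesgue_on {a..b}) g"
proof (rule Bochner_Integration.integrable_bound[of _ "\<lambda>t. 1 + (norm (g t))^2"])
  show "integrable (lebesgue_on {a..b}) (\<lambda>t. 1 + (norm (g t))^2)"
    using assms unfolding L2_on_def by (intro Bochner_Integration.integrable_add) auto
  show "g \<in> borel_measurable (lebesgue_on {a..b})" using assms unfolding L2_on_def by blast
  have "norm x \<le> 1 + (norm x)^2" for x :: 'a
  proof -
    have "0 \<le> (norm x - 1)^2" by simp
    then have "2 * norm x \<le> 1 + (norm x)^2" by (simp add: power2_diff)
    then show ?thesis using norm_ge_zero[of x] by linarith
  qed
  then show "AE x in lebesgue_on {a..b}. norm (g x) \<le> norm (1 + (norm (g x))^2)"
    by (intro AE_I2) auto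
qed

lemma integrable_bounded_scaleR:
  fixes f :: "'a \<Rightarrow> 'b::euclidean_space"
  assumes f: "integrable M f" and s: "s \<in> borel_measurable M" and K: "\<And>t. \<bar>s t\<bar> \<le> K"
  shows "integrable M (\<lambda>t. s t *\<^sub>R f t)"
proof (rule Bochner_Integration.integrable_bound[OF integrable_scaleR_right[OF f, of K]])
  show "(\<lambda>t. s t *\<^sub>R f t) \<in> borel_measurable M" using s f by (intro borel_measurable_scaleR) auto
  have "norm (s x *\<^sub>R f x) \<le> norm (K *\<^sub>R f x)" for x
    using K[of x] unfolding norm_scaleR by (intro mult_right_mono) auto
  then show "AE x in M. norm (s x *\<^sub>R f x) \<le> norm (K *\<^sub>R f x)" by simp
qed

lemma set_integral_support_cong:
  fixes F :: "real \<Rightarrow> 'a::euclidean_space"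
  assumes "\<And>x. F x \<noteq> 0 \<Longrightarrow> x \<in> A \<and> x \<in> B"
  shows "set_integrable M A F \<longleftrightarrow> set_integrable M B F" "(LINT x:A|M. F x) = (LINT x:B|M. F x)"
proof -
  have eq: "(\<lambda>x. indicator A x *\<^sub>R F x) = (\<lambda>x. indicator B x *\<^sub>R F x)"
    using assms by (force simp: indicator_def)
  show "set_integrable M A F \<longleftrightarrow> set_integrable M B F"
    unfolding set_integrable_def eq ..
  show "(LINT x:A|M. F x) = (LINT x:B|M. F x)"
    unfolding set_lebesgue_integral_def eq ..
qed

lemma set_integrable_supported_scaleR:
  fixes f :: "real \<Rightarrow> 'a::euclidean_space"
  assumes f: "set_integrable lebesgue {c..d} f" and ac: "a < c" and db: "d < b"
    and \<psi>: "continuous_on UNIV \<psi>" "\<And>x. x \<notin> {c..d} \<Longrightarrow> \<psi> x = 0"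
  shows "set_integrable lebesgue {a<..<b} (\<lambda>x. \<psi> x *\<^sub>R f x)"
proof -
  obtain K where K: "\<And>x. \<bar>\<psi> x\<bar> \<le> K" using bounded_if_vanishing_outside[OF \<psi>] by blast
  have "integrable lebesgue (\<lambda>x. \<psi> x *\<^sub>R (indicator {c..d} x *\<^sub>R f x))"
    using f unfolding set_integrable_def
    by (rule integrable_bounded_scaleR[OF _ continuous_measurable_lebesgue[OF \<psi>(1)] K])
  then have "set_integrable lebesgue {c..d} (\<lambda>x. \<psi> x *\<^sub>R f x)"
    unfolding set_integrable_def by (simp add: mult.commute)
  moreover have "\<psi> x *\<^sub>R f x \<noteq> 0 \<Longrightarrow> x \<in> {c..d} \<and> x \<in> {a<..<b}" for x
    using \<psi>(2)[of x] ac db by (cases "x \<in> {c..d}") auto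
  then have "set_integrable lebesgue {c..d} (\<lambda>x. \<psi> x *\<^sub>R f x)
      \<longleftrightarrow> set_integrable lebesgue {a<..<b} (\<lambda>x. \<psi> x *\<^sub>R f x)"
    by (rule set_integral_support_cong(1))
  ultimately show ?thesis by simp
qed

lemma has_weak_deriv_on_cong:
  fixes f g :: "real \<Rightarrow> 'a::euclidean_space"
  assumes h: "has_weak_deriv_on a b f g"
    and ef: "\<And>x. a < x \<Longrightarrow> x < b \<Longrightarrow> f x = f' x"
    and eg: "\<And>x. a < x \<Longrightarrow> x < b \<Longrightarrow> g x = g' x"
  shows "has_weak_deriv_on a b f' g'"
  unfolding has_weak_deriv_on_def
proof (intro conjI allI impI)
  fix c d assume cd: "a < c \<and> d < b"
  have "set_integrable lebesgue {c..d} f" "set_integrable lebesgue {c..d} g"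
    using h cd unfolding has_weak_deriv_on_def by blast+
  moreover have "set_integrable lebesgue {c..d} f = set_integrable lebesgue {c..d} f'"
    by (rule set_integrable_cong) (use cd ef in auto)
  moreover have "set_integrable lebesgue {c..d} g = set_integrable lebesgue {c..d} g'"
    by (rule set_integrable_cong) (use cd eg in auto)
  ultimately show "set_integrable lebesgue {c..d} f'" "set_integrable lebesgue {c..d} g'" by simp_all
next
  fix \<phi> assume "test_function a b \<phi>"
  then have "(LINT t:{a<..<b}|lebesgue. deriv \<phi> t *\<^sub>R f t) = - (LINT t:{a<..<b}|lebesgue. \<phi> t *\<^sub>R g t)"
    using h unfolding has_weak_deriv_on_def by blast
  moreover have "(LINT t:{a<..<b}|lebesgue. deriv \<phi> t *\<^sub>R f t) = (LINT t:{a<..<b}|lebesgue. deriv \<phi> t *\<^sub>R f' t)"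
    by (rule set_lebesgue_integral_cong) (use ef in auto)
  moreover have "(LINT t:{a<..<b}|lebesgue. \<phi> t *\<^sub>R g t) = (LINT t:{a<..<b}|lebesgue. \<phi> t *\<^sub>R g' t)"
    by (rule set_lebesgue_integral_cong) (use eg in auto)
  ultimately show "(LINT t:{a<..<b}|lebesgue. deriv \<phi> t *\<^sub>R f' t) = - (LINT t:{a<..<b}|lebesgue. \<phi> t *\<^sub>R g' t)"
    by simp
qed

lemma has_weak_deriv_on_add:
  fixes f g f2 g2 :: "real \<Rightarrow> 'a::euclidean_space"
  assumes h1: "has_weak_deriv_on a b f g" and h2: "has_weak_deriv_on a b f2 g2"
  shows "has_weak_deriv_on a b (\<lambda>x. f x + f2 x) (\<lambda>x. g x + g2 x)"
  unfolding has_weak_deriv_on_def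
proof (intro conjI allI impI)
  fix c d assume "a < c \<and> d < b"
  then have i: "set_integrable lebesgue {c..d} f" "set_integrable lebesgue {c..d} f2"
    "set_integrable lebesgue {c..d} g" "set_integrable lebesgue {c..d} g2"
    using h1 h2 unfolding has_weak_deriv_on_def by blast+
  show "set_integrable lebesgue {c..d} (\<lambda>x. f x + f2 x)" by (rule set_integral_add(1)[OF i(1,2)])
  show "set_integrable lebesgue {c..d} (\<lambda>x. g x + g2 x)" by (rule set_integral_add(1)[OF i(3,4)])
next
  fix \<phi> assume t: "test_function a b \<phi>"
  then obtain c d where cd: "a < c" "d < b" and \<phi>: "C1_supported c d \<phi>"
    by (rule test_function_C1_supported) blast
  note cont = C1_supported_continuous[OF \<phi>] and vanish = C1_supported_vanishes[OF \<phi>]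
  have loc: "set_integrable lebesgue {c..d} f" "set_integrable lebesgue {c..d} f2"
    "set_integrable lebesgue {c..d} g" "set_integrable lebesgue {c..d} g2"
    using h1 h2 cd unfolding has_weak_deriv_on_def by blast+
  have d_int: "set_integrable lebesgue {a<..<b} (\<lambda>x. deriv \<phi> x *\<^sub>R F x)"
    if "set_integrable lebesgue {c..d} F" for F :: "real \<Rightarrow> 'a"
    by (rule set_integrable_supported_scaleR[OF that cd cont(2) vanish(2)])
  have int: "set_integrable lebesgue {a<..<b} (\<lambda>x. \<phi> x *\<^sub>R G x)"
    if "set_integrable lebesgue {c..d} G" for G :: "real \<Rightarrow> 'a"
    by (rule set_integrable_supported_scaleR[OF that cd cont(1) vanish(1)])
  have "(LINT t:{a<..<b}|lebesgue. deriv \<phi> t *\<^sub>R (f t + f2 t))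
      = (LINT t:{a<..<b}|lebesgue. deriv \<phi> t *\<^sub>R f t) + (LINT t:{a<..<b}|lebesgue. deriv \<phi> t *\<^sub>R f2 t)"
    using set_integral_add(2)[OF d_int[OF loc(1)] d_int[OF loc(2)]] by (simp add: scaleR_add_right)
  also have "\<dots> = - ((LINT t:{a<..<b}|lebesgue. \<phi> t *\<^sub>R g t) + (LINT t:{a<..<b}|lebesgue. \<phi> t *\<^sub>R g2 t))"
  proof -
    have "(LINT t:{a<..<b}|lebesgue. deriv \<phi> t *\<^sub>R f t) = - (LINT t:{a<..<b}|lebesgue. \<phi> t *\<^sub>R g t)"
      "(LINT t:{a<..<b}|lebesgue. deriv \<phi> t *\<^sub>R f2 t) = - (LINT t:{a<..<b}|lebesgue. \<phi> t *\<^sub>R g2 t)"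
      using h1 h2 t unfolding has_weak_deriv_on_def by blast+
    then show ?thesis by (simp only: minus_add_distrib)
  qed
  also have "\<dots> = - (LINT t:{a<..<b}|lebesgue. \<phi> t *\<^sub>R (g t + g2 t))"
    using set_integral_add(2)[OF int[OF loc(3)] int[OF loc(4)]] by (simp add: scaleR_add_right)
  finally show "(LINT t:{a<..<b}|lebesgue. deriv \<phi> t *\<^sub>R (f t + f2 t)) = - (LINT t:{a<..<b}|lebesgue. \<phi> t *\<^sub>R (g t + g2 t))" .
qed

lemma has_weak_deriv_on_C1:
  fixes f f' :: "real \<Rightarrow> 'a::euclidean_space"
  assumes f: "\<And>t. (f has_vector_derivative f' t) (at t)" and f': "continuous_on UNIV f'"
  shows "has_weak_deriv_on a b f f'"
  unfolding has_weak_deriv_on_def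
proof (intro conjI allI impI)
  have cf: "continuous_on UNIV f"
    using f by (meson continuous_at_imp_continuous_on has_vector_derivative_continuous)
  fix c d
  show "set_integrable lebesgue {c..d} f" "set_integrable lebesgue {c..d} f'"
    by (intro absolutely_integrable_continuous_real continuous_on_subset[OF cf] continuous_on_subset[OF f'];
        simp)+
next
  have cf: "continuous_on UNIV f"
    using f by (meson continuous_at_imp_continuous_on has_vector_derivative_continuous)
  fix \<phi> assume "test_function a b \<phi>"
  then obtain c d where cd: "a < c" "c \<le> d" "d < b" and \<phi>: "C1_supported c d \<phi>"
    by (rule test_function_C1_supported)
  note cont = C1_supported_continuous[OF \<phi>]
  define F1 where "F1 t = deriv \<phi> t *\<^sub>R f t" for t
  define F2 where "F2 t = \<phi> t *\<^sub>R f' t" for t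
  have c1: "continuous_on {a..b} F1" and c2: "continuous_on {a..b} F2" unfolding F1_def F2_def
    by (intro continuous_intros continuous_on_subset[OF cont(2)] continuous_on_subset[OF cont(1)]
          continuous_on_subset[OF cf] continuous_on_subset[OF f']; simp)+
  text \<open>Integration by parts: the boundary terms vanish because \<open>\<phi>\<close> vanishes at \<open>a\<close> and \<open>b\<close>.\<close>
  have "((\<lambda>t. F2 t + F1 t) has_integral (\<phi> b *\<^sub>R f b - \<phi> a *\<^sub>R f a)) {a..b}"
  proof (rule fundamental_theorem_of_calculus)
    show "a \<le> b" using cd by simp
    fix x
    have "((\<lambda>t. \<phi> t *\<^sub>R f t) has_vector_derivative (\<phi> x *\<^sub>R f' x + deriv \<phi> x *\<^sub>R f x)) (at x)"
      by (rule has_vector_derivative_scaleR[OF C1_supported_deriv[OF \<phi>] f])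
    then show "((\<lambda>t. \<phi> t *\<^sub>R f t) has_vector_derivative F2 x + F1 x) (at x within {a..b})"
      unfolding F1_def F2_def by (rule has_vector_derivative_at_within)
  qed
  moreover have "\<phi> a = 0" "\<phi> b = 0" using cd C1_supported_vanishes(1)[OF \<phi>] by auto
  ultimately have "integral {a..b} F2 + integral {a..b} F1 = 0"
    using integral_add[OF integrable_continuous_interval[OF c2] integrable_continuous_interval[OF c1]]
    by (simp add: integral_unique)
  moreover have "(LINT t:{a<..<b}|lebesgue. F t) = integral {a..b} F"
    if "continuous_on {a..b} F" for F :: "real \<Rightarrow> 'a"
  proof -
    have "set_integrable lebesgue {a<..<b} F"
      by (rule set_integrable_subset[OF absolutely_integrable_continuous_real[OF that]]) auto
    then show ?thesis using set_lebesgue_integral_eq_integral(2) integral_open_interval_real by metis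
  qed
  ultimately show "(LINT t:{a<..<b}|lebesgue. deriv \<phi> t *\<^sub>R f t) = - (LINT t:{a<..<b}|lebesgue. \<phi> t *\<^sub>R f' t)"
    using c1 c2 unfolding F1_def F2_def by (simp add: eq_neg_iff_add_eq_0 add.commute)
qed

lemma H1_on_cong:
  fixes f :: "real \<Rightarrow> 'a::euclidean_space"
  assumes h: "H1_on a b f" and e: "\<And>x. x \<in> {a..b} \<Longrightarrow> f x = f' x"
  shows "H1_on a b f'"
proof -
  obtain g where g: "L2_on {a..b} g" "has_weak_deriv_on a b f g"
    using h unfolding H1_on_def by blast
  have "continuous_on {a..b} f'" using h e continuous_on_cong unfolding H1_on_def by metis
  moreover have "L2_on {a..b} f'" using h e L2_on_cong unfolding H1_on_def by blast
  moreover have "has_weak_deriv_on a b f' g" by (rule has_weak_deriv_on_cong[OF g(2)]) (use e in auto)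
  ultimately show ?thesis unfolding H1_on_def using g(1) by blast
qed

lemma H1_on_add_C1:
  fixes x h h' :: "real \<Rightarrow> 'a::euclidean_space"
  assumes x: "H1_on a b x" and h: "\<And>t. (h has_vector_derivative h' t) (at t)" and h': "continuous_on UNIV h'"
  shows "H1_on a b (\<lambda>t. x t + h t)"
proof -
  have ch: "continuous_on UNIV h"
    using h by (meson continuous_at_imp_continuous_on has_vector_derivative_continuous)
  obtain g where g: "L2_on {a..b} g" "has_weak_deriv_on a b x g"
    using x unfolding H1_on_def by blast
  have "continuous_on {a..b} (\<lambda>t. x t + h t)"
    using x unfolding H1_on_def by (intro continuous_on_add continuous_on_subset[OF ch]) auto
  moreover have "L2_on {a..b} (\<lambda>t. x t + h t)"
    using x L2_on_continuous[OF continuous_on_subset[OF ch]] unfolding H1_on_def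
    by (intro L2_on_add) auto
  moreover have "L2_on {a..b} (\<lambda>t. g t + h' t)"
    using g(1) L2_on_continuous[OF continuous_on_subset[OF h']] by (intro L2_on_add) auto
  moreover have "has_weak_deriv_on a b (\<lambda>t. x t + h t) (\<lambda>t. g t + h' t)"
    by (rule has_weak_deriv_on_add[OF g(2) has_weak_deriv_on_C1[OF h h']])
  ultimately show ?thesis unfolding H1_on_def by blast
qed

text \<open>A function with a weak derivative, and the weak derivative itself, are measurable on the
  open interval, being locally integrable.\<close>
lemma has_weak_deriv_on_measurable:
  fixes f g :: "real \<Rightarrow> 'a::euclidean_space"
  assumes h: "has_weak_deriv_on a b f g" and F: "F \<in> {f, g}"
  shows "F \<in> borel_measurable (lebesgue_on {a<..<b})"
proof (cases "a < b")
  case False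
  then have "{a<..<b} = {}" by auto
  then show ?thesis by (simp add: borel_measurable_restrict_space_iff)
next
  case True
  text \<open>Exhaust \<open>(a,b)\<close> by the compact intervals \<open>[a + \<delta> n, b - \<delta> n]\<close>, on which \<open>F\<close> is integrable.\<close>
  define \<delta> where "\<delta> n = (b - a) / real (n + 2)" for n :: nat
  have \<delta>_pos: "\<delta> n > 0" for n using True unfolding \<delta>_def by simp
  have m: "(\<lambda>x. indicator {a + \<delta> n..b - \<delta> n} x *\<^sub>R F x) \<in> borel_measurable lebesgue" for n
  proof -
    have "set_integrable lebesgue {a + \<delta> n..b - \<delta> n} F"
      using h F \<delta>_pos[of n] unfolding has_weak_deriv_on_def by auto
    then show ?thesis unfolding set_integrable_def by (rule borel_measurable_integrable)
  qed
  have "(\<lambda>x. indicator {a<..<b} x *\<^sub>R F x) \<in> borel_measurable lebesgue"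
  proof (rule borel_measurable_LIMSEQ_metric[OF m])
    fix x :: real
    have "\<forall>\<^sub>F n in sequentially. indicator {a + \<delta> n..b - \<delta> n} x = (indicator {a<..<b} x :: real)"
    proof (cases "x \<in> {a<..<b}")
      case False
      then have "indicator {a + \<delta> n..b - \<delta> n} x = (0::real)" for n
        using \<delta>_pos[of n] by (auto simp: indicator_def)
      then show ?thesis using False by simp
    next
      case x: True
      define m where "m = min (x - a) (b - x)"
      have m0: "m > 0" using x unfolding m_def by auto
      obtain N :: nat where N: "(b - a) / m < real N" using reals_Archimedean2 by blast
      show ?thesis
      proof (rule eventually_sequentiallyI[of N])
        fix n assume "N \<le> n"
        then have "(b - a) / m < real (n + 2)" using N by linarith
        then have "\<delta> n < m" using m0 unfolding \<delta>_def by (simp add: field_simps)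
        then show "indicator {a + \<delta> n..b - \<delta> n} x = (indicator {a<..<b} x :: real)"
          using x unfolding m_def by auto
      qed
    qed
    then show "(\<lambda>n. indicator {a + \<delta> n..b - \<delta> n} x *\<^sub>R F x) \<longlonglongrightarrow> indicator {a<..<b} x *\<^sub>R F x"
      by (rule tendsto_eventually[OF eventually_mono]) simp
  qed
  then show ?thesis by (simp add: lebesgue_on_measurable_iff)
qed

lemma has_real_derivative_along_line:
  fixes F :: "'a::real_normed_vector \<Rightarrow> real"
  assumes "(F has_derivative F') (at (z + s *\<^sub>R v))"
  shows "((\<lambda>s. F (z + s *\<^sub>R v)) has_real_derivative F' v) (at s)"
proof -
  have "((\<lambda>s. z + s *\<^sub>R v) has_derivative (\<lambda>h. h *\<^sub>R v)) (at s)"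
    by (auto intro!: derivative_eq_intros)
  then have "((\<lambda>s. F (z + s *\<^sub>R v)) has_derivative (\<lambda>h. F' (h *\<^sub>R v))) (at s)"
    using has_derivative_compose assms by blast
  moreover have "(\<lambda>h. F' (h *\<^sub>R v)) = (*) (F' v)"
    using linear_scale[OF has_derivative_linear[OF assms]] by (auto simp: fun_eq_iff)
  ultimately show ?thesis unfolding has_field_derivative_def by simp
qed

lemma difference_quotient_along_line:
  fixes F :: "'b::real_normed_vector \<Rightarrow> real"
  assumes F: "\<And>w. (F has_derivative DF w) (at w)"
  shows "((\<lambda>h. (F (z + h *\<^sub>R v) - F z) / h) \<longlongrightarrow> DF z v) (at 0)"
proof -
  have "((\<lambda>s. F (z + s *\<^sub>R v)) has_real_derivative DF z v) (at 0)"
    using has_real_derivative_along_line[of F "DF z" z 0 v] F by simp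
  then show ?thesis unfolding DERIV_def by simp
qed

lemma difference_quotient_bound:
  fixes F :: "'b::real_normed_vector \<Rightarrow> real"
  assumes F: "\<And>w. (F has_derivative DF w) (at w)" and B: "\<And>w. \<bar>DF w v\<bar> \<le> B"
  shows "\<bar>(F (z + h *\<^sub>R v) - F z) / h\<bar> \<le> B"
proof (cases "h = 0")
  case True
  then show ?thesis using order_trans[OF abs_ge_zero B[of z]] by simp
next
  case False
  have "norm (F (z + h *\<^sub>R v) - F (z + 0 *\<^sub>R v)) \<le> B * norm (h - 0)"
  proof (rule field_differentiable_bound[OF convex_UNIV])
    show "((\<lambda>s. F (z + s *\<^sub>R v)) has_field_derivative DF (z + s *\<^sub>R v) v) (at s within UNIV)" for s
      using F by (simp add: has_real_derivative_along_line)
  qed (use B in auto)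
  then show ?thesis using False by (simp add: abs_divide divide_le_eq)
qed

lemma integral_difference_quotients_tendsto:
  fixes F :: "'a \<Rightarrow> 'b::real_normed_vector \<Rightarrow> real" and DF :: "'a \<Rightarrow> 'b \<Rightarrow> 'b \<Rightarrow> real"
  assumes deriv: "AE t in M. \<forall>w. (F t has_derivative DF t w) (at w)"
    and dom: "AE t in M. \<forall>w. \<bar>DF t w (v t)\<bar> \<le> g t" and g: "integrable M g"
    and intF: "\<And>s. integrable M (\<lambda>t. F t (z t + s *\<^sub>R v t))"
    and mD: "(\<lambda>t. DF t (z t) (v t)) \<in> borel_measurable M"
  shows "((\<lambda>h. \<integral>t. (F t (z t + h *\<^sub>R v t) - F t (z t)) / h \<partial>M) \<longlongrightarrow> (\<integral>t. DF t (z t) (v t) \<partial>M)) (at 0)"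
proof -
  define Q where "Q h t = (F t (z t + h *\<^sub>R v t) - F t (z t)) / h" for h t
  have "(\<lambda>n. \<integral>t. Q (X n) t \<partial>M) \<longlonglongrightarrow> (\<integral>t. DF t (z t) (v t) \<partial>M)"
    if X0: "\<forall>n. X n \<noteq> 0" and X: "X \<longlonglongrightarrow> 0" for X :: "nat \<Rightarrow> real"
  proof (rule integral_dominated_convergence[OF mD _ g])
    show "Q (X n) \<in> borel_measurable M" for n
      using intF[of "X n"] intF[of 0] unfolding Q_def
      by (intro borel_measurable_divide borel_measurable_diff borel_measurable_const) auto
    show "AE t in M. (\<lambda>n. Q (X n) t) \<longlonglongrightarrow> DF t (z t) (v t)"
      using deriv
    proof eventually_elim
      case (elim t)
      then have "((\<lambda>h. Q h t) \<longlongrightarrow> DF t (z t) (v t)) (at 0)"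
        unfolding Q_def by (intro difference_quotient_along_line) blast
      then show ?case using LIMSEQ_SEQ_conv[of 0 "\<lambda>h. Q h t"] X0 X by blast
    qed
    show "AE t in M. norm (Q (X n) t) \<le> g t" for n
      using deriv dom
    proof eventually_elim
      case (elim t)
      then show ?case unfolding Q_def using difference_quotient_bound[of "F t" "DF t" "v t" "g t"] by simp
    qed
  qed
  then show ?thesis unfolding Q_def using LIMSEQ_SEQ_conv by blast
qed

lemma first_variation_vanishes:
  fixes F :: "'a \<Rightarrow> 'b::real_normed_vector \<Rightarrow> real" and DF :: "'a \<Rightarrow> 'b \<Rightarrow> 'b \<Rightarrow> real"
  assumes deriv: "AE t in M. \<forall>w. (F t has_derivative DF t w) (at w)"
    and dom: "AE t in M. \<forall>w. \<bar>DF t w (v t)\<bar> \<le> g t" and g: "integrable M g"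
    and intF: "\<And>s. integrable M (\<lambda>t. F t (z t + s *\<^sub>R v t))"
    and mD: "(\<lambda>t. DF t (z t) (v t)) \<in> borel_measurable M"
    and min: "\<And>s. (\<integral>t. F t (z t) \<partial>M) \<le> (\<integral>t. F t (z t + s *\<^sub>R v t) \<partial>M)"
  shows "(\<integral>t. DF t (z t) (v t) \<partial>M) = 0"
proof -
  define \<Phi> where "\<Phi> s = (\<integral>t. F t (z t + s *\<^sub>R v t) \<partial>M)" for s
  have int0: "integrable M (\<lambda>t. F t (z t))" using intF[of 0] by simp
  have "(\<lambda>h. (\<Phi> (0 + h) - \<Phi> 0) / h) = (\<lambda>h. \<integral>t. (F t (z t + h *\<^sub>R v t) - F t (z t)) / h \<partial>M)"
    by (intro ext) (simp add: \<Phi>_def int0 intF)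
  then have "DERIV \<Phi> 0 :> (\<integral>t. DF t (z t) (v t) \<partial>M)"
    unfolding DERIV_def using integral_difference_quotients_tendsto[OF deriv dom g intF mD] by simp
  moreover have "\<forall>y. \<bar>0 - y\<bar> < 1 \<longrightarrow> \<Phi> 0 \<le> \<Phi> y" using min unfolding \<Phi>_def by simp
  ultimately show ?thesis using DERIV_local_min[OF _ zero_less_one] by blast
qed

definition zero_ext :: "real set \<Rightarrow> (real \<Rightarrow> 'a::real_vector) \<Rightarrow> real \<Rightarrow> 'a" where
  "zero_ext S f t = indicator S t *\<^sub>R f t"

lemma integrable_zero_ext_shift:
  fixes f :: "real \<Rightarrow> 'a::euclidean_space"
  assumes "integrable (lebesgue_on S) f" "S \<in> sets lebesgue"
  shows "integrable lebesgue (\<lambda>s. zero_ext S f (s + \<tau>))"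
proof -
  have "integrable lebesgue (zero_ext S f)"
    unfolding zero_ext_def using assms by (simp add: integrable_restrict_space)
  from lebesgue_integrable_real_affine[OF this, of 1 \<tau>] show ?thesis by (simp add: add.commute)
qed

lemma shifted_pairing:
  fixes G :: "real \<Rightarrow> 'a::euclidean_space"
  assumes G: "integrable (lebesgue_on S) G" and S: "S \<in> sets lebesgue"
    and \<psi>: "continuous_on UNIV \<psi>" and K: "\<And>t. \<bar>\<psi> t\<bar> \<le> K"
  shows "integrable (lebesgue_on S) (\<lambda>t. \<psi> (t - \<tau>) *\<^sub>R G t)"
    and "integrable lebesgue (\<lambda>s. \<psi> s *\<^sub>R zero_ext S G (s + \<tau>))"
    and "(\<integral>s. \<psi> s *\<^sub>R zero_ext S G (s + \<tau>) \<partial>lebesgue) = (\<integral>t. \<psi> (t - \<tau>) *\<^sub>R G t \<partial>lebesgue_on S)"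
proof -
  have "(\<lambda>t. \<psi> (t - \<tau>)) \<in> borel_measurable lebesgue"
    by (rule continuous_measurable_lebesgue) (intro continuous_on_compose2[OF \<psi>] continuous_intros; simp)
  moreover have "\<bar>\<psi> (t - \<tau>)\<bar> \<le> K" for t by (rule K)
  ultimately show int: "integrable (lebesgue_on S) (\<lambda>t. \<psi> (t - \<tau>) *\<^sub>R G t)"
    by (intro integrable_bounded_scaleR[OF G] measurable_restrict_space1)
  have eq: "zero_ext S (\<lambda>t. \<psi> (t - \<tau>) *\<^sub>R G t) (\<tau> + 1 * s) = \<psi> s *\<^sub>R zero_ext S G (s + \<tau>)" for s
    by (simp add: zero_ext_def add.commute)
  have "integrable lebesgue (zero_ext S (\<lambda>t. \<psi> (t - \<tau>) *\<^sub>R G t))"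
    unfolding zero_ext_def using int S by (simp add: integrable_restrict_space)
  from lebesgue_integrable_real_affine[OF this, of 1 \<tau>]
  show "integrable lebesgue (\<lambda>s. \<psi> s *\<^sub>R zero_ext S G (s + \<tau>))" by (simp only: eq)
  have "(\<integral>t. \<psi> (t - \<tau>) *\<^sub>R G t \<partial>lebesgue_on S) = (\<integral>t. zero_ext S (\<lambda>t. \<psi> (t - \<tau>) *\<^sub>R G t) t \<partial>lebesgue)"
    using S by (simp add: integral_restrict_space zero_ext_def)
  also have "\<dots> = (\<integral>s. \<psi> s *\<^sub>R zero_ext S G (s + \<tau>) \<partial>lebesgue)"
    using lebesgue_integral_real_affine[of 1 "zero_ext S (\<lambda>t. \<psi> (t - \<tau>) *\<^sub>R G t)" \<tau>] by (simp only: eq) simp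
  finally show "(\<integral>s. \<psi> s *\<^sub>R zero_ext S G (s + \<tau>) \<partial>lebesgue) = (\<integral>t. \<psi> (t - \<tau>) *\<^sub>R G t \<partial>lebesgue_on S)" ..
qed

type_synonym 'n args4 = "(real^'n) \<times> (real^'n) \<times> (real^'n) \<times> (real^'n)"

locale delay_minimizer =
  fixes L :: "real \<Rightarrow> real^'n::finite \<Rightarrow> real^'n \<Rightarrow> real^'n \<Rightarrow> real^'n \<Rightarrow> real"
    and L2 L3 L4 L5 :: "real \<Rightarrow> real^'n \<Rightarrow> real^'n \<Rightarrow> real^'n \<Rightarrow> real^'n \<Rightarrow> real^'n"
    and \<theta>1 \<theta>2 :: "real \<Rightarrow> real^'n" and \<alpha> :: "real^'n"
    and T \<tau>1 \<tau>2 :: real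
    and xb xbd :: "real \<Rightarrow> real^'n"
    and \<gamma>1 \<gamma>2 \<gamma>3 \<gamma>4 \<gamma>5 :: "real \<Rightarrow> real"
  assumes tau: "0 < \<tau>2" "\<tau>2 < \<tau>1" "\<tau>1 < T"
    and A1_C1: "AE t in lebesgue_on {0..T}.
        (\<forall>a ab b bb. ((\<lambda>(u,v,w,s). L t u v w s) has_derivative
            (\<lambda>(h1,h2,h3,h4). L2 t a ab b bb \<bullet> h1 + L3 t a ab b bb \<bullet> h2
                              + L4 t a ab b bb \<bullet> h3 + L5 t a ab b bb \<bullet> h4))
            (at (a,ab,b,bb)))
        \<and> continuous_on UNIV (\<lambda>(a,ab,b,bb). L2 t a ab b bb)
        \<and> continuous_on UNIV (\<lambda>(a,ab,b,bb). L3 t a ab b bb)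
        \<and> continuous_on UNIV (\<lambda>(a,ab,b,bb). L4 t a ab b bb)
        \<and> continuous_on UNIV (\<lambda>(a,ab,b,bb). L5 t a ab b bb)"
    and A1_meas: "\<And>a ab b bb. (\<lambda>t. L t a ab b bb) \<in> borel_measurable (lebesgue_on {0..T})"
    and gam: "L2_on {0..T} \<gamma>1" "L2_on {0..T} \<gamma>2" "L2_on {0..T} \<gamma>3" "L2_on {0..T} \<gamma>4" "L2_on {0..T} \<gamma>5"
    and gbd: "AE t in lebesgue_on {0..T}. \<forall>a ab b bb.
              \<bar>L t a ab b bb\<bar> \<le> \<gamma>1 t \<and> norm (L2 t a ab b bb) \<le> \<gamma>2 t
              \<and> norm (L3 t a ab b bb) \<le> \<gamma>3 t \<and> norm (L4 t a ab b bb) \<le> \<gamma>4 t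
              \<and> norm (L5 t a ab b bb) \<le> \<gamma>5 t"
    and xb_in: "xb \<in> Dset \<tau>1 \<tau>2 T \<theta>1 \<theta>2 \<alpha>"
    and xbd: "is_xdot \<tau>2 T xb xbd"
    and minimal: "\<And>y yd. y \<in> Dset \<tau>1 \<tau>2 T \<theta>1 \<theta>2 \<alpha> \<Longrightarrow> is_xdot \<tau>2 T y yd \<Longrightarrow>
                    Jfun L \<tau>1 \<tau>2 T xb xbd \<le> Jfun L \<tau>1 \<tau>2 T y yd"
begin

definition FL :: "real \<Rightarrow> 'n args4 \<Rightarrow> real" where
  "FL t = (\<lambda>(u,v,w,s). L t u v w s)"

definition DL :: "real \<Rightarrow> 'n args4 \<Rightarrow> 'n args4 \<Rightarrow> real" where
  "DL t z = (case z of (a,ab,b,bb) \<Rightarrow> (\<lambda>(h1,h2,h3,h4). L2 t a ab b bb \<bullet> h1 + L3 t a ab b bb \<bullet> h2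
                              + L4 t a ab b bb \<bullet> h3 + L5 t a ab b bb \<bullet> h4))"

definition regular :: "real \<Rightarrow> bool" where
  "regular t \<longleftrightarrow> (\<forall>z. (FL t has_derivative DL t z) (at z)) \<and>
     (\<forall>a ab b bb. \<bar>L t a ab b bb\<bar> \<le> \<gamma>1 t \<and> norm (L2 t a ab b bb) \<le> \<gamma>2 t
              \<and> norm (L3 t a ab b bb) \<le> \<gamma>3 t \<and> norm (L4 t a ab b bb) \<le> \<gamma>4 t
              \<and> norm (L5 t a ab b bb) \<le> \<gamma>5 t)"

definition state :: "real \<Rightarrow> 'n args4" where
  "state t = (xb t, xb (t - \<tau>1), xbd t, xbd (t - \<tau>2))"

abbreviation "LX2 \<equiv> along L2 \<tau>1 \<tau>2 xb xbd"
abbreviation "LX3 \<equiv> along L3 \<tau>1 \<tau>2 xb xbd"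
abbreviation "LX4 \<equiv> along L4 \<tau>1 \<tau>2 xb xbd"
abbreviation "LX5 \<equiv> along L5 \<tau>1 \<tau>2 xb xbd"

lemma AE_regular: "AE t in lebesgue_on {0..T}. regular t"
  using A1_C1 gbd
proof eventually_elim
  case (elim t)
  have "(FL t has_derivative DL t z) (at z)" for z
    using elim by (cases z) (simp add: FL_def DL_def)
  then show ?case using elim unfolding regular_def by blast
qed

lemma regular_bounds:
  assumes "regular t"
  shows "\<bar>FL t w\<bar> \<le> \<bar>\<gamma>1 t\<bar>" "norm (L2 t a ab b bb) \<le> \<bar>\<gamma>2 t\<bar>" "norm (L3 t a ab b bb) \<le> \<bar>\<gamma>3 t\<bar>"
    "norm (L4 t a ab b bb) \<le> \<bar>\<gamma>4 t\<bar>" "norm (L5 t a ab b bb) \<le> \<bar>\<gamma>5 t\<bar>"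
proof -
  have "\<bar>L t u v w' s\<bar> \<le> \<bar>\<gamma>1 t\<bar>" for u v w' s
    using assms unfolding regular_def by (meson abs_ge_self order_trans)
  then show "\<bar>FL t w\<bar> \<le> \<bar>\<gamma>1 t\<bar>" by (cases w) (simp add: FL_def)
  show "norm (L2 t a ab b bb) \<le> \<bar>\<gamma>2 t\<bar>" "norm (L3 t a ab b bb) \<le> \<bar>\<gamma>3 t\<bar>"
    "norm (L4 t a ab b bb) \<le> \<bar>\<gamma>4 t\<bar>" "norm (L5 t a ab b bb) \<le> \<bar>\<gamma>5 t\<bar>"
    using assms unfolding regular_def by (meson abs_ge_self order_trans)+
qed

lemma DL_bound:
  assumes t: "regular t" and v: "norm v1 \<le> R" "norm v2 \<le> R" "norm v3 \<le> R" "norm v4 \<le> R"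
  shows "\<bar>DL t w (v1,v2,v3,v4)\<bar> \<le> R * (\<bar>\<gamma>2 t\<bar> + \<bar>\<gamma>3 t\<bar> + \<bar>\<gamma>4 t\<bar> + \<bar>\<gamma>5 t\<bar>)"
proof -
  obtain a ab b bb where w: "w = (a,ab,b,bb)" by (cases w) blast
  have R: "R \<ge> 0" using v(1) norm_ge_zero order_trans by blast
  have CS: "\<bar>x \<bullet> h\<bar> \<le> \<bar>\<gamma>\<bar> * R" if "norm x \<le> \<bar>\<gamma>\<bar>" "norm h \<le> R" for x h :: "real^'n" and \<gamma>
  proof -
    have "\<bar>x \<bullet> h\<bar> \<le> norm x * norm h" by (rule Cauchy_Schwarz_ineq2)
    also have "\<dots> \<le> \<bar>\<gamma>\<bar> * R" using that by (intro mult_mono) auto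
    finally show ?thesis .
  qed
  have "\<bar>DL t w (v1,v2,v3,v4)\<bar> \<le> \<bar>L2 t a ab b bb \<bullet> v1\<bar> + \<bar>L3 t a ab b bb \<bullet> v2\<bar>
      + \<bar>L4 t a ab b bb \<bullet> v3\<bar> + \<bar>L5 t a ab b bb \<bullet> v4\<bar>"
    unfolding w DL_def by simp
  also have "\<dots> \<le> \<bar>\<gamma>2 t\<bar> * R + \<bar>\<gamma>3 t\<bar> * R + \<bar>\<gamma>4 t\<bar> * R + \<bar>\<gamma>5 t\<bar> * R"
    using CS[OF regular_bounds(2)[OF t, of a ab b bb] v(1)] CS[OF regular_bounds(3)[OF t, of a ab b bb] v(2)]
      CS[OF regular_bounds(4)[OF t, of a ab b bb] v(3)] CS[OF regular_bounds(5)[OF t, of a ab b bb] v(4)]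
    by linarith
  finally show ?thesis by (simp add: algebra_simps)
qed

lemma xb_measurable: "xb \<in> borel_measurable (lebesgue_on {-\<tau>1..T})"
proof -
  have x: "L2_on {-\<tau>1..-\<tau>2} xb" "H1_on (-\<tau>2) 0 xb" "H1_on 0 T xb"
    using xb_in unfolding Dset_def HH_def by auto
  have m2: "xb \<in> borel_measurable (lebesgue_on {-\<tau>2..0})" and m3: "xb \<in> borel_measurable (lebesgue_on {0..T})"
    using x(2,3) unfolding H1_on_def by (simp_all add: continuous_imp_measurable_on_sets_lebesgue)
  have m1: "xb \<in> borel_measurable (lebesgue_on {-\<tau>1..-\<tau>2})" using x(1) unfolding L2_on_def by blast
  have "xb \<in> borel_measurable (lebesgue_on (({-\<tau>1..-\<tau>2} \<union> {-\<tau>2..0}) \<union> {0..T}))"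
    by (rule lebesgue_on_measurable_Un[OF _ _ lebesgue_on_measurable_Un[OF _ _ m1 m2] m3]) auto
  moreover have "({-\<tau>1..-\<tau>2} \<union> {-\<tau>2..0}) \<union> {0..T} = {-\<tau>1..T}" using tau by auto
  ultimately show ?thesis by simp
qed

lemma xbd_measurable: "xbd \<in> borel_measurable (lebesgue_on {-\<tau>2..T})"
proof -
  have "has_weak_deriv_on (-\<tau>2) 0 xb xbd" "has_weak_deriv_on 0 T xb xbd"
    using xbd unfolding is_xdot_def by auto
  then have "xbd \<in> borel_measurable (lebesgue_on {-\<tau>2<..<0})" "xbd \<in> borel_measurable (lebesgue_on {0<..<T})"
    by (simp_all add: has_weak_deriv_on_measurable)
  then have "xbd \<in> borel_measurable (lebesgue_on ({-\<tau>2<..<0} \<union> {0<..<T}))"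
    by (rule lebesgue_on_measurable_Un[rotated 2]) auto
  then have m: "(\<lambda>x. indicator ({-\<tau>2<..<0} \<union> {0<..<T}) x *\<^sub>R xbd x) \<in> borel_measurable lebesgue"
    by (simp add: lebesgue_on_measurable_iff)
  text \<open>The two open intervals miss only the null set \<open>{-\<tau>2, 0, T}\<close> of \<open>[-\<tau>2, T]\<close>.\<close>
  have "AE x in lebesgue. indicator ({-\<tau>2<..<0} \<union> {0<..<T}) x *\<^sub>R xbd x = indicator {-\<tau>2..T} x *\<^sub>R xbd x"
  proof (rule AE_I')
    show "{-\<tau>2, 0, T} \<in> null_sets lebesgue" by simp
  qed (use tau in \<open>auto simp: indicator_def\<close>)
  then have "(\<lambda>x. indicator {-\<tau>2..T} x *\<^sub>R xbd x) \<in> borel_measurable lebesgue"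
    by (rule borel_measurable_AE[OF m])
  then show ?thesis by (simp add: lebesgue_on_measurable_iff)
qed

lemma state_measurable: "state \<in> borel_measurable (lebesgue_on {0..T})"
proof -
  have shift: "(\<lambda>t. f (t - \<tau>)) \<in> borel_measurable (lebesgue_on {0..T})"
    if f: "f \<in> borel_measurable (lebesgue_on {-\<tau>..T})" and "0 < \<tau>" for f :: "real \<Rightarrow> real^'n" and \<tau>
  proof -
    have "(\<lambda>t. f (t + - \<tau>)) \<in> borel_measurable (lebesgue_on {0..T + \<tau>})"
      by (rule lebesgue_on_measurable_shift[OF _ _ f]) auto
    then have "(\<lambda>t. f (t + - \<tau>)) \<in> borel_measurable (lebesgue_on {0..T})"
      by (rule measurable_restrict_mono) (use \<open>0 < \<tau>\<close> in auto)
    then show ?thesis by simp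
  qed
  have "xb \<in> borel_measurable (lebesgue_on {0..T})"
    by (rule measurable_restrict_mono[OF xb_measurable]) (use tau in auto)
  moreover have "xbd \<in> borel_measurable (lebesgue_on {0..T})"
    by (rule measurable_restrict_mono[OF xbd_measurable]) (use tau in auto)
  moreover have "(\<lambda>t. xb (t - \<tau>1)) \<in> borel_measurable (lebesgue_on {0..T})"
    by (rule shift[OF xb_measurable]) (use tau in auto)
  moreover have "(\<lambda>t. xbd (t - \<tau>2)) \<in> borel_measurable (lebesgue_on {0..T})"
    by (rule shift[OF xbd_measurable]) (use tau in auto)
  ultimately show ?thesis unfolding state_def by (intro borel_measurable_Pair)
qed

lemma FL_measurable:
  assumes u: "u \<in> borel_measurable (lebesgue_on {0..T})"
  shows "(\<lambda>t. FL t (u t)) \<in> borel_measurable (lebesgue_on {0..T})"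
proof (rule measurable_superposition[OF _ _ _ u])
  show "(\<lambda>t. FL t z) \<in> borel_measurable (lebesgue_on {0..T})" for z
    using A1_meas by (cases z) (simp add: FL_def)
  show "AE t in lebesgue_on {0..T}. continuous_on UNIV (FL t)"
    using AE_regular
  proof eventually_elim
    case (elim t)
    then have "isCont (FL t) z" for z
      unfolding regular_def using has_derivative_continuous by blast
    then show ?case by (simp add: continuous_at_imp_continuous_on)
  qed
qed simp

lemma FL_integrable:
  assumes u: "u \<in> borel_measurable (lebesgue_on {0..T})"
  shows "integrable (lebesgue_on {0..T}) (\<lambda>t. FL t (u t))"
proof (rule Bochner_Integration.integrable_bound[OF L2_on_integrable[OF gam(1)] FL_measurable[OF u]])
  show "AE t in lebesgue_on {0..T}. norm (FL t (u t)) \<le> norm (\<gamma>1 t)"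
    using AE_regular by eventually_elim (simp add: regular_bounds)
qed

text \<open>The partial derivatives of \<open>L\<close> need not be measurable in \<open>t\<close> a priori; along a measurable
  trajectory they are, being pointwise limits of difference quotients of \<open>L\<close>.\<close>
lemma DL_measurable:
  assumes u: "u \<in> borel_measurable (lebesgue_on {0..T})"
  shows "(\<lambda>t. DL t (u t) v) \<in> borel_measurable (lebesgue_on {0..T})"
proof (rule lebesgue_on_measurable_AE_limit)
  define e where "e n = 1 / real (Suc n)" for n
  show "(\<lambda>t. (FL t (u t + e n *\<^sub>R v) - FL t (u t)) / e n) \<in> borel_measurable (lebesgue_on {0..T})" for n
    using FL_measurable[of "\<lambda>t. u t + e n *\<^sub>R v"] FL_measurable[OF u] u
    by (intro borel_measurable_divide borel_measurable_diff borel_measurable_const) auto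
  have e: "e \<longlonglongrightarrow> 0" "\<forall>n. e n \<noteq> 0"
    unfolding e_def using LIMSEQ_inverse_real_of_nat by (simp_all add: inverse_eq_divide)
  show "AE t in lebesgue_on {0..T}. (\<lambda>n. (FL t (u t + e n *\<^sub>R v) - FL t (u t)) / e n) \<longlonglongrightarrow> DL t (u t) v"
    using AE_regular
  proof eventually_elim
    case (elim t)
    then have "(FL t has_derivative DL t (u t)) (at (u t))" unfolding regular_def by blast
    then have "((\<lambda>s. FL t (u t + s *\<^sub>R v)) has_real_derivative DL t (u t) v) (at 0)"
      using has_real_derivative_along_line[of "FL t" "DL t (u t)" "u t" 0 v] by simp
    then have "((\<lambda>h. (FL t (u t + h *\<^sub>R v) - FL t (u t)) / h) \<longlongrightarrow> DL t (u t) v) (at 0)"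
      unfolding DERIV_def by simp
    then show ?case
      using e LIMSEQ_SEQ_conv[of 0 "\<lambda>h. (FL t (u t + h *\<^sub>R v) - FL t (u t)) / h"] by blast
  qed
qed simp

lemma partials_measurable:
  "LX2 \<in> borel_measurable (lebesgue_on {0..T})" "LX3 \<in> borel_measurable (lebesgue_on {0..T})"
  "LX4 \<in> borel_measurable (lebesgue_on {0..T})" "LX5 \<in> borel_measurable (lebesgue_on {0..T})"
proof -
  have componentwise: "f \<in> borel_measurable (lebesgue_on {0..T})"
    if "\<And>i. (\<lambda>t. f t \<bullet> i) \<in> borel_measurable (lebesgue_on {0..T})" for f :: "real \<Rightarrow> real^'n"
    using that by (subst borel_measurable_euclidean_space) blast
  have D: "(\<lambda>t. DL t (state t) v) \<in> borel_measurable (lebesgue_on {0..T})" for v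
    by (rule DL_measurable[OF state_measurable])
  have eq: "(\<lambda>t. LX2 t \<bullet> i) = (\<lambda>t. DL t (state t) (i, 0, 0, 0))"
    "(\<lambda>t. LX3 t \<bullet> i) = (\<lambda>t. DL t (state t) (0, i, 0, 0))"
    "(\<lambda>t. LX4 t \<bullet> i) = (\<lambda>t. DL t (state t) (0, 0, i, 0))"
    "(\<lambda>t. LX5 t \<bullet> i) = (\<lambda>t. DL t (state t) (0, 0, 0, i))" for i
    by (simp_all add: DL_def state_def along_def)
  show "LX2 \<in> borel_measurable (lebesgue_on {0..T})" by (rule componentwise) (simp only: eq D)
  show "LX3 \<in> borel_measurable (lebesgue_on {0..T})" by (rule componentwise) (simp only: eq D)
  show "LX4 \<in> borel_measurable (lebesgue_on {0..T})" by (rule componentwise) (simp only: eq D)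
  show "LX5 \<in> borel_measurable (lebesgue_on {0..T})" by (rule componentwise) (simp only: eq D)
qed

lemma partials_integrable:
  "integrable (lebesgue_on {0..T}) LX2" "integrable (lebesgue_on {0..T}) LX3"
  "integrable (lebesgue_on {0..T}) LX4" "integrable (lebesgue_on {0..T}) LX5"
proof -
  show "integrable (lebesgue_on {0..T}) LX2"
    by (rule Bochner_Integration.integrable_bound[OF L2_on_integrable[OF gam(2)] partials_measurable(1)])
      (use AE_regular in \<open>eventually_elim, simp add: along_def regular_bounds\<close>)
  show "integrable (lebesgue_on {0..T}) LX3"
    by (rule Bochner_Integration.integrable_bound[OF L2_on_integrable[OF gam(3)] partials_measurable(2)])
      (use AE_regular in \<open>eventually_elim, simp add: along_def regular_bounds\<close>)
  show "integrable (lebesgue_on {0..T}) LX4"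
    by (rule Bochner_Integration.integrable_bound[OF L2_on_integrable[OF gam(4)] partials_measurable(3)])
      (use AE_regular in \<open>eventually_elim, simp add: along_def regular_bounds\<close>)
  show "integrable (lebesgue_on {0..T}) LX5"
    by (rule Bochner_Integration.integrable_bound[OF L2_on_integrable[OF gam(5)] partials_measurable(4)])
      (use AE_regular in \<open>eventually_elim, simp add: along_def regular_bounds\<close>)
qed


lemma Jfun_eq:
  "Jfun L \<tau>1 \<tau>2 T y yd = (\<integral>t. FL t (y t, y (t - \<tau>1), yd t, yd (t - \<tau>2)) \<partial>lebesgue_on {0..T})"
  unfolding Jfun_def set_lebesgue_integral_def FL_def by (subst integral_restrict_space) auto

lemma variation_admissible:
  fixes e :: "real^'n"
  assumes \<phi>: "C1_supported c d \<phi>" and c0: "0 < c" and dT: "d < T"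
  shows "(\<lambda>t. xb t + \<phi> t *\<^sub>R e) \<in> Dset \<tau>1 \<tau>2 T \<theta>1 \<theta>2 \<alpha>"
    and "is_xdot \<tau>2 T (\<lambda>t. xb t + \<phi> t *\<^sub>R e) (\<lambda>t. xbd t + deriv \<phi> t *\<^sub>R e)"
proof -
  have vanish: "\<phi> t = 0" "deriv \<phi> t = 0" if "t \<le> 0 \<or> T \<le> t" for t
    using C1_supported_vanishes[OF \<phi>] that c0 dT by auto
  have h: "((\<lambda>t. \<phi> t *\<^sub>R e) has_vector_derivative deriv \<phi> t *\<^sub>R e) (at t)" for t
    using has_vector_derivative_scaleR[OF C1_supported_deriv[OF \<phi>] has_vector_derivative_const[of e]] by simp
  have h': "continuous_on UNIV (\<lambda>t. deriv \<phi> t *\<^sub>R e)"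
    using C1_supported_continuous(2)[OF \<phi>] by (intro continuous_intros)
  have x: "L2_on {-\<tau>1..-\<tau>2} xb" "H1_on (-\<tau>2) 0 xb" "H1_on 0 T xb"
    and bc: "\<forall>t\<in>{-\<tau>1..<-\<tau>2}. xb t = \<theta>1 t" "\<forall>t\<in>{-\<tau>2..0}. xb t = \<theta>2 t" "xb T = \<alpha>"
    using xb_in unfolding Dset_def HH_def by auto
  have left: "xb t + \<phi> t *\<^sub>R e = xb t" "xbd t + deriv \<phi> t *\<^sub>R e = xbd t" if "t \<le> 0" for t
    using vanish that by auto
  have "L2_on {-\<tau>1..-\<tau>2} (\<lambda>t. xb t + \<phi> t *\<^sub>R e)" by (rule L2_on_cong[OF x(1)]) (use left tau in auto)
  moreover have "H1_on (-\<tau>2) 0 (\<lambda>t. xb t + \<phi> t *\<^sub>R e)" by (rule H1_on_cong[OF x(2)]) (use left in auto)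
  moreover have "H1_on 0 T (\<lambda>t. xb t + \<phi> t *\<^sub>R e)" by (rule H1_on_add_C1[OF x(3) h h'])
  moreover have "xb T + \<phi> T *\<^sub>R e = \<alpha>" using bc(3) vanish by simp
  ultimately show "(\<lambda>t. xb t + \<phi> t *\<^sub>R e) \<in> Dset \<tau>1 \<tau>2 T \<theta>1 \<theta>2 \<alpha>"
    using bc(1,2) left tau unfolding Dset_def HH_def by auto
  have X: "has_weak_deriv_on (-\<tau>2) 0 xb xbd" "has_weak_deriv_on 0 T xb xbd"
    using xbd unfolding is_xdot_def by auto
  have "has_weak_deriv_on (-\<tau>2) 0 (\<lambda>t. xb t + \<phi> t *\<^sub>R e) (\<lambda>t. xbd t + deriv \<phi> t *\<^sub>R e)"
    by (rule has_weak_deriv_on_cong[OF X(1)]) (use left in auto)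
  moreover have "has_weak_deriv_on 0 T (\<lambda>t. xb t + \<phi> t *\<^sub>R e) (\<lambda>t. xbd t + deriv \<phi> t *\<^sub>R e)"
    by (rule has_weak_deriv_on_add[OF X(2) has_weak_deriv_on_C1[OF h h']])
  ultimately show "is_xdot \<tau>2 T (\<lambda>t. xb t + \<phi> t *\<^sub>R e) (\<lambda>t. xbd t + deriv \<phi> t *\<^sub>R e)"
    unfolding is_xdot_def by blast
qed

lemma pairing_with_partial:
  assumes \<phi>: "C1_supported c d \<phi>" and G: "G \<in> {LX2, LX3, LX4, LX5}" and \<psi>: "\<psi> \<in> {\<phi>, deriv \<phi>}"
  shows "integrable (lebesgue_on {0..T}) (\<lambda>t. \<psi> (t - \<tau>) *\<^sub>R G t)"
    and "integrable lebesgue (\<lambda>s. \<psi> s *\<^sub>R zero_ext {0..T} G (s + \<tau>))"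
    and "(\<integral>s. \<psi> s *\<^sub>R zero_ext {0..T} G (s + \<tau>) \<partial>lebesgue) = (\<integral>t. \<psi> (t - \<tau>) *\<^sub>R G t \<partial>lebesgue_on {0..T})"
proof -
  obtain K where K: "\<And>t. \<bar>\<phi> t\<bar> \<le> K" "\<And>t. \<bar>deriv \<phi> t\<bar> \<le> K"
    using C1_supported_bounded[OF \<phi>] by blast
  have \<psi>K: "continuous_on UNIV \<psi>" "\<bar>\<psi> t\<bar> \<le> K" for t
    using \<psi> C1_supported_continuous[OF \<phi>] K by auto
  have "integrable (lebesgue_on {0..T}) G"
    using G partials_integrable by auto
  note pairing = shifted_pairing[OF this _ \<psi>K]
  show "integrable (lebesgue_on {0..T}) (\<lambda>t. \<psi> (t - \<tau>) *\<^sub>R G t)"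
    and "integrable lebesgue (\<lambda>s. \<psi> s *\<^sub>R zero_ext {0..T} G (s + \<tau>))"
    and "(\<integral>s. \<psi> s *\<^sub>R zero_ext {0..T} G (s + \<tau>) \<partial>lebesgue) = (\<integral>t. \<psi> (t - \<tau>) *\<^sub>R G t \<partial>lebesgue_on {0..T})"
    by (rule pairing; simp)+
qed

definition variation_density :: "(real \<Rightarrow> real) \<Rightarrow> real \<Rightarrow> real^'n" where
  "variation_density \<phi> t = \<phi> t *\<^sub>R LX2 t + \<phi> (t - \<tau>1) *\<^sub>R LX3 t
     + deriv \<phi> t *\<^sub>R LX4 t + deriv \<phi> (t - \<tau>2) *\<^sub>R LX5 t"

lemma integral_variation_density:
  assumes \<phi>: "C1_supported c d \<phi>"
  shows "integrable (lebesgue_on {0..T}) (variation_density \<phi>)"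
    and "(\<integral>t. variation_density \<phi> t \<partial>lebesgue_on {0..T})
      = (\<integral>t. \<phi> (t - 0) *\<^sub>R LX2 t \<partial>lebesgue_on {0..T}) + (\<integral>t. \<phi> (t - \<tau>1) *\<^sub>R LX3 t \<partial>lebesgue_on {0..T})
      + (\<integral>t. deriv \<phi> (t - 0) *\<^sub>R LX4 t \<partial>lebesgue_on {0..T}) + (\<integral>t. deriv \<phi> (t - \<tau>2) *\<^sub>R LX5 t \<partial>lebesgue_on {0..T})"
proof -
  have i2: "integrable (lebesgue_on {0..T}) (\<lambda>t. \<phi> (t - 0) *\<^sub>R LX2 t)"
    and i3: "integrable (lebesgue_on {0..T}) (\<lambda>t. \<phi> (t - \<tau>1) *\<^sub>R LX3 t)"
    and i4: "integrable (lebesgue_on {0..T}) (\<lambda>t. deriv \<phi> (t - 0) *\<^sub>R LX4 t)"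
    and i5: "integrable (lebesgue_on {0..T}) (\<lambda>t. deriv \<phi> (t - \<tau>2) *\<^sub>R LX5 t)"
    by (intro pairing_with_partial(1)[OF \<phi>]; simp)+
  have "variation_density \<phi> = (\<lambda>t. \<phi> (t - 0) *\<^sub>R LX2 t + \<phi> (t - \<tau>1) *\<^sub>R LX3 t
      + deriv \<phi> (t - 0) *\<^sub>R LX4 t + deriv \<phi> (t - \<tau>2) *\<^sub>R LX5 t)"
    by (simp add: fun_eq_iff variation_density_def)
  then show "integrable (lebesgue_on {0..T}) (variation_density \<phi>)"
    and "(\<integral>t. variation_density \<phi> t \<partial>lebesgue_on {0..T})
      = (\<integral>t. \<phi> (t - 0) *\<^sub>R LX2 t \<partial>lebesgue_on {0..T}) + (\<integral>t. \<phi> (t - \<tau>1) *\<^sub>R LX3 t \<partial>lebesgue_on {0..T})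
      + (\<integral>t. deriv \<phi> (t - 0) *\<^sub>R LX4 t \<partial>lebesgue_on {0..T}) + (\<integral>t. deriv \<phi> (t - \<tau>2) *\<^sub>R LX5 t \<partial>lebesgue_on {0..T})"
    using i2 i3 i4 i5 by simp_all
qed


definition variation_direction :: "(real \<Rightarrow> real) \<Rightarrow> real^'n \<Rightarrow> real \<Rightarrow> 'n args4" where
  "variation_direction \<phi> e t = (\<phi> t *\<^sub>R e, \<phi> (t - \<tau>1) *\<^sub>R e, deriv \<phi> t *\<^sub>R e, deriv \<phi> (t - \<tau>2) *\<^sub>R e)"

lemma variation_direction_measurable:
  assumes \<phi>: "C1_supported c d \<phi>"
  shows "variation_direction \<phi> e \<in> borel_measurable (lebesgue_on {0..T})"
proof -
  have meas: "(\<lambda>t. f (t - \<tau>) *\<^sub>R e) \<in> borel_measurable (lebesgue_on {0..T})"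
    if "continuous_on UNIV f" for f :: "real \<Rightarrow> real" and \<tau>
  proof -
    have "continuous_on UNIV (\<lambda>t. f (t - \<tau>))"
      by (rule continuous_on_compose2[OF that]) (auto intro: continuous_intros)
    then show ?thesis
      by (intro borel_measurable_scaleR borel_measurable_const measurable_restrict_space1
          continuous_measurable_lebesgue)
  qed
  note cont = C1_supported_continuous[OF \<phi>]
  show ?thesis
    using meas[OF cont(1), of 0] meas[OF cont(1), of \<tau>1] meas[OF cont(2), of 0] meas[OF cont(2), of \<tau>2]
    unfolding variation_direction_def by (intro borel_measurable_Pair) simp_all
qed

lemma variation_direction_derivative:
  "DL t (state t) (variation_direction \<phi> e t) = variation_density \<phi> t \<bullet> e"
  unfolding DL_def state_def variation_direction_def variation_density_def along_def
  by (simp add: inner_add_left)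

lemma variation_direction_dominated:
  assumes t: "regular t" and K: "\<And>t. \<bar>\<phi> t\<bar> \<le> K" "\<And>t. \<bar>deriv \<phi> t\<bar> \<le> K"
  shows "\<bar>DL t w (variation_direction \<phi> e t)\<bar> \<le> K * norm e * (\<bar>\<gamma>2 t\<bar> + \<bar>\<gamma>3 t\<bar> + \<bar>\<gamma>4 t\<bar> + \<bar>\<gamma>5 t\<bar>)"
proof -
  have scaled: "norm (r *\<^sub>R e) \<le> K * norm e" if "\<bar>r\<bar> \<le> K" for r
    using that by (simp add: mult_right_mono)
  show ?thesis unfolding variation_direction_def by (intro DL_bound[OF t] scaled K)
qed

lemma first_variation_identity:
  assumes \<phi>: "C1_supported c d \<phi>" and c0: "0 < c" and dT: "d < T"
  shows "(\<integral>t. variation_density \<phi> t \<partial>lebesgue_on {0..T}) = 0"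
proof -
  obtain K where K: "\<And>t. \<bar>\<phi> t\<bar> \<le> K" "\<And>t. \<bar>deriv \<phi> t\<bar> \<le> K"
    using C1_supported_bounded[OF \<phi>] by blast
  note W = integral_variation_density(1)[OF \<phi>]
  have "(\<integral>t. variation_density \<phi> t \<partial>lebesgue_on {0..T}) \<bullet> e = 0" for e
  proof -
    let ?V = "variation_direction \<phi> e"
    have "(\<integral>t. DL t (state t) (?V t) \<partial>lebesgue_on {0..T}) = 0"
    proof (rule first_variation_vanishes[where F = FL and DF = DL and z = state and v = ?V
          and g = "\<lambda>t. K * norm e * (\<bar>\<gamma>2 t\<bar> + \<bar>\<gamma>3 t\<bar> + \<bar>\<gamma>4 t\<bar> + \<bar>\<gamma>5 t\<bar>)"])
      show "AE t in lebesgue_on {0..T}. \<forall>w. (FL t has_derivative DL t w) (at w)"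
        using AE_regular by eventually_elim (simp add: regular_def)
      show "AE t in lebesgue_on {0..T}. \<forall>w. \<bar>DL t w (?V t)\<bar>
          \<le> K * norm e * (\<bar>\<gamma>2 t\<bar> + \<bar>\<gamma>3 t\<bar> + \<bar>\<gamma>4 t\<bar> + \<bar>\<gamma>5 t\<bar>)"
        using AE_regular by eventually_elim (intro allI variation_direction_dominated K)
      show "integrable (lebesgue_on {0..T}) (\<lambda>t. K * norm e * (\<bar>\<gamma>2 t\<bar> + \<bar>\<gamma>3 t\<bar> + \<bar>\<gamma>4 t\<bar> + \<bar>\<gamma>5 t\<bar>))"
        using gam by (intro integrable_mult_right Bochner_Integration.integrable_add integrable_abs L2_on_integrable)
      show "integrable (lebesgue_on {0..T}) (\<lambda>t. FL t (state t + s *\<^sub>R ?V t))" for s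
        by (intro FL_integrable borel_measurable_add borel_measurable_scaleR state_measurable
            borel_measurable_const variation_direction_measurable[OF \<phi>])
      show "(\<lambda>t. DL t (state t) (?V t)) \<in> borel_measurable (lebesgue_on {0..T})"
        unfolding variation_direction_derivative using W by (intro borel_measurable_inner borel_measurable_const) auto
      show "(\<integral>t. FL t (state t) \<partial>lebesgue_on {0..T}) \<le> (\<integral>t. FL t (state t + s *\<^sub>R ?V t) \<partial>lebesgue_on {0..T})" for s
      proof -
        have "Jfun L \<tau>1 \<tau>2 T xb xbd
            \<le> Jfun L \<tau>1 \<tau>2 T (\<lambda>t. xb t + \<phi> t *\<^sub>R (s *\<^sub>R e)) (\<lambda>t. xbd t + deriv \<phi> t *\<^sub>R (s *\<^sub>R e))"
          by (intro minimal variation_admissible[OF \<phi> c0 dT])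
        then show ?thesis
          unfolding Jfun_eq by (simp add: state_def variation_direction_def prod_eq_iff mult.commute)
      qed
    qed
    then show ?thesis using W by (simp add: variation_direction_derivative)
  qed
  from this[of "\<integral>t. variation_density \<phi> t \<partial>lebesgue_on {0..T}"] show ?thesis by simp
qed

definition momentum :: "real \<Rightarrow> real^'n" where
  "momentum s = zero_ext {0..T} LX4 s + zero_ext {0..T} LX5 (s + \<tau>2)"

definition force :: "real \<Rightarrow> real^'n" where
  "force s = zero_ext {0..T} LX2 s + zero_ext {0..T} LX3 (s + \<tau>1)"

text \<open>Pairing the test function with the two sides is pairing its shifts with the partial
  derivatives on \<open>[0, T]\<close>: integrate over the whole line (both integrands vanish outside the support
  \<open>[c, d] \<subseteq> (a, b)\<close> of the test function) and substitute \<open>t = s + \<tau>\<close> in the delayed terms.\<close>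
lemma momentum_force_pairings:
  assumes \<phi>: "C1_supported c d \<phi>" and cd: "a < c" "d < b"
  shows "(LINT t:{a<..<b}|lebesgue. deriv \<phi> t *\<^sub>R momentum t)
      = (\<integral>t. deriv \<phi> (t - 0) *\<^sub>R LX4 t \<partial>lebesgue_on {0..T}) + (\<integral>t. deriv \<phi> (t - \<tau>2) *\<^sub>R LX5 t \<partial>lebesgue_on {0..T})"
    and "(LINT t:{a<..<b}|lebesgue. \<phi> t *\<^sub>R force t)
      = (\<integral>t. \<phi> (t - 0) *\<^sub>R LX2 t \<partial>lebesgue_on {0..T}) + (\<integral>t. \<phi> (t - \<tau>1) *\<^sub>R LX3 t \<partial>lebesgue_on {0..T})"
proof -
  note vanish = C1_supported_vanishes[OF \<phi>] and pair = pairing_with_partial[OF \<phi>]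
  have on_line: "(LINT t:{a<..<b}|lebesgue. \<psi> t *\<^sub>R F t) = (\<integral>t. \<psi> t *\<^sub>R F t \<partial>lebesgue)"
    if "\<psi> \<in> {\<phi>, deriv \<phi>}" for \<psi> and F :: "real \<Rightarrow> real^'n"
  proof -
    have "\<psi> t *\<^sub>R F t \<noteq> 0 \<Longrightarrow> t \<in> {a<..<b} \<and> t \<in> UNIV" for t
      using that vanish[of t] cd by (cases "t \<in> {c..d}") auto
    then have "(LINT t:{a<..<b}|lebesgue. \<psi> t *\<^sub>R F t) = (LINT t:UNIV|lebesgue. \<psi> t *\<^sub>R F t)"
      by (rule set_integral_support_cong(2))
    then show ?thesis by (simp add: set_lebesgue_integral_def)
  qed
  have "(LINT t:{a<..<b}|lebesgue. deriv \<phi> t *\<^sub>R momentum t) = (\<integral>t. deriv \<phi> t *\<^sub>R momentum t \<partial>lebesgue)"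
    by (rule on_line) simp
  also have "\<dots> = (\<integral>t. deriv \<phi> (t - 0) *\<^sub>R LX4 t \<partial>lebesgue_on {0..T}) + (\<integral>t. deriv \<phi> (t - \<tau>2) *\<^sub>R LX5 t \<partial>lebesgue_on {0..T})"
    using pair(2,3)[of LX4 "deriv \<phi>" 0] pair(2,3)[of LX5 "deriv \<phi>" \<tau>2]
    unfolding momentum_def scaleR_add_right by simp
  finally show "(LINT t:{a<..<b}|lebesgue. deriv \<phi> t *\<^sub>R momentum t)
      = (\<integral>t. deriv \<phi> (t - 0) *\<^sub>R LX4 t \<partial>lebesgue_on {0..T}) + (\<integral>t. deriv \<phi> (t - \<tau>2) *\<^sub>R LX5 t \<partial>lebesgue_on {0..T})" .
  have "(LINT t:{a<..<b}|lebesgue. \<phi> t *\<^sub>R force t) = (\<integral>t. \<phi> t *\<^sub>R force t \<partial>lebesgue)"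
    by (rule on_line) simp
  also have "\<dots> = (\<integral>t. \<phi> (t - 0) *\<^sub>R LX2 t \<partial>lebesgue_on {0..T}) + (\<integral>t. \<phi> (t - \<tau>1) *\<^sub>R LX3 t \<partial>lebesgue_on {0..T})"
    using pair(2,3)[of LX2 \<phi> 0] pair(2,3)[of LX3 \<phi> \<tau>1]
    unfolding force_def scaleR_add_right by simp
  finally show "(LINT t:{a<..<b}|lebesgue. \<phi> t *\<^sub>R force t)
      = (\<integral>t. \<phi> (t - 0) *\<^sub>R LX2 t \<partial>lebesgue_on {0..T}) + (\<integral>t. \<phi> (t - \<tau>1) *\<^sub>R LX3 t \<partial>lebesgue_on {0..T})" .
qed

lemma momentum_weak_derivative:
  assumes a: "0 \<le> a" and b: "b \<le> T"
  shows "has_weak_deriv_on a b momentum force"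
  unfolding has_weak_deriv_on_def
proof (intro conjI allI impI)
  have S: "{0..T} \<in> sets lebesgue" by simp
  have "integrable lebesgue momentum" "integrable lebesgue force"
    unfolding momentum_def force_def
    using integrable_zero_ext_shift[OF partials_integrable(1) S, of 0] integrable_zero_ext_shift[OF partials_integrable(2) S]
      integrable_zero_ext_shift[OF partials_integrable(3) S, of 0] integrable_zero_ext_shift[OF partials_integrable(4) S]
    by (intro Bochner_Integration.integrable_add; simp)+
  then show "set_integrable lebesgue {c..d} momentum" "set_integrable lebesgue {c..d} force" for c d
    unfolding set_integrable_def by (simp_all add: integrable_mult_indicator)
next
  fix \<phi> assume "test_function a b \<phi>"
  then obtain c d where cd: "a < c" "c \<le> d" "d < b" and \<phi>: "C1_supported c d \<phi>"
    by (rule test_function_C1_supported)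
  have "(\<integral>t. variation_density \<phi> t \<partial>lebesgue_on {0..T}) = 0"
    by (rule first_variation_identity[OF \<phi>]) (use a b cd in auto)
  then show "(LINT t:{a<..<b}|lebesgue. deriv \<phi> t *\<^sub>R momentum t) = - (LINT t:{a<..<b}|lebesgue. \<phi> t *\<^sub>R force t)"
    unfolding integral_variation_density(2)[OF \<phi>] momentum_force_pairings[OF \<phi> cd(1,3)]
    by (simp add: algebra_simps eq_neg_iff_add_eq_0)
qed

end

theorem theorem1:
  fixes L :: "real \<Rightarrow> real^'n \<Rightarrow> real^'n \<Rightarrow> real^'n \<Rightarrow> real^'n \<Rightarrow> real"
    and L2 L3 L4 L5 :: "real \<Rightarrow> real^'n \<Rightarrow> real^'n \<Rightarrow> real^'n \<Rightarrow> real^'n \<Rightarrow> real^'n"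
    and \<theta>1 \<theta>2 :: "real \<Rightarrow> real^'n" and \<alpha> :: "real^'n"
    and T \<tau>1 \<tau>2 :: real
    and xb xbd :: "real \<Rightarrow> real^'n"
  assumes tau: "0 < \<tau>2" "\<tau>2 < \<tau>1" "\<tau>1 < T"
    and theta: "\<theta>1 piecewise_C1_differentiable_on {-\<tau>1..-\<tau>2}"
               "\<theta>2 piecewise_C1_differentiable_on {-\<tau>2..0}"
    \<comment> \<open>(A1): C^1 in (a, abar, b, bbar) for a.e. t, with partial derivatives L2..L5\<close>
    and A1_C1: "AE t in lebesgue_on {0..T}.
        (\<forall>a ab b bb. ((\<lambda>(u,v,w,s). L t u v w s) has_derivative
            (\<lambda>(h1,h2,h3,h4). L2 t a ab b bb \<bullet> h1 + L3 t a ab b bb \<bullet> h2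
                              + L4 t a ab b bb \<bullet> h3 + L5 t a ab b bb \<bullet> h4))
            (at (a,ab,b,bb)))
        \<and> continuous_on UNIV (\<lambda>(a,ab,b,bb). L2 t a ab b bb)
        \<and> continuous_on UNIV (\<lambda>(a,ab,b,bb). L3 t a ab b bb)
        \<and> continuous_on UNIV (\<lambda>(a,ab,b,bb). L4 t a ab b bb)
        \<and> continuous_on UNIV (\<lambda>(a,ab,b,bb). L5 t a ab b bb)"
    \<comment> \<open>(A1): measurable in t\<close>
    and A1_meas: "\<And>a ab b bb. (\<lambda>t. L t a ab b bb) \<in> borel_measurable (lebesgue_on {0..T})"
    \<comment> \<open>(A2)\<close>
    and A2: "\<exists>\<gamma>1 \<gamma>2 \<gamma>3 \<gamma>4 \<gamma>5 :: real \<Rightarrow> real.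
        L2_on {0..T} \<gamma>1 \<and> L2_on {0..T} \<gamma>2 \<and> L2_on {0..T} \<gamma>3 \<and> L2_on {0..T} \<gamma>4 \<and> L2_on {0..T} \<gamma>5
        \<and> (\<forall>t\<in>{0..T}. \<gamma>1 t \<ge> 0 \<and> \<gamma>2 t \<ge> 0 \<and> \<gamma>3 t \<ge> 0 \<and> \<gamma>4 t \<ge> 0 \<and> \<gamma>5 t \<ge> 0)
        \<and> (AE t in lebesgue_on {0..T}. \<forall>a ab b bb.
              \<bar>L t a ab b bb\<bar> \<le> \<gamma>1 t \<and> norm (L2 t a ab b bb) \<le> \<gamma>2 t
              \<and> norm (L3 t a ab b bb) \<le> \<gamma>3 t \<and> norm (L4 t a ab b bb) \<le> \<gamma>4 t
              \<and> norm (L5 t a ab b bb) \<le> \<gamma>5 t)"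
    \<comment> \<open>xb is a minimizer of J over D; xbd is its weak derivative\<close>
    and xb_in: "xb \<in> Dset \<tau>1 \<tau>2 T \<theta>1 \<theta>2 \<alpha>"
    and xbd: "is_xdot \<tau>2 T xb xbd"
    and minimal: "\<And>y yd. y \<in> Dset \<tau>1 \<tau>2 T \<theta>1 \<theta>2 \<alpha> \<Longrightarrow> is_xdot \<tau>2 T y yd \<Longrightarrow>
                    Jfun L \<tau>1 \<tau>2 T xb xbd \<le> Jfun L \<tau>1 \<tau>2 T y yd"
  shows "has_weak_deriv_on 0 (T - \<tau>1)
           (\<lambda>t. along L4 \<tau>1 \<tau>2 xb xbd t + along L5 \<tau>1 \<tau>2 xb xbd (t + \<tau>2))
           (\<lambda>t. along L2 \<tau>1 \<tau>2 xb xbd t + along L3 \<tau>1 \<tau>2 xb xbd (t + \<tau>1))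
       \<and> has_weak_deriv_on (T - \<tau>1) (T - \<tau>2)
           (\<lambda>t. along L4 \<tau>1 \<tau>2 xb xbd t + along L5 \<tau>1 \<tau>2 xb xbd (t + \<tau>2))
           (\<lambda>t. along L2 \<tau>1 \<tau>2 xb xbd t)
       \<and> has_weak_deriv_on (T - \<tau>2) T
           (along L4 \<tau>1 \<tau>2 xb xbd) (along L2 \<tau>1 \<tau>2 xb xbd)"
proof -
  from A2 obtain \<gamma>1 \<gamma>2 \<gamma>3 \<gamma>4 \<gamma>5 :: "real \<Rightarrow> real" where
    \<gamma>: "L2_on {0..T} \<gamma>1" "L2_on {0..T} \<gamma>2" "L2_on {0..T} \<gamma>3" "L2_on {0..T} \<gamma>4" "L2_on {0..T} \<gamma>5"
    and bounds: "AE t in lebesgue_on {0..T}. \<forall>a ab b bb.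
              \<bar>L t a ab b bb\<bar> \<le> \<gamma>1 t \<and> norm (L2 t a ab b bb) \<le> \<gamma>2 t
              \<and> norm (L3 t a ab b bb) \<le> \<gamma>3 t \<and> norm (L4 t a ab b bb) \<le> \<gamma>4 t
              \<and> norm (L5 t a ab b bb) \<le> \<gamma>5 t"
    by blast
  interpret delay_minimizer L L2 L3 L4 L5 \<theta>1 \<theta>2 \<alpha> T \<tau>1 \<tau>2 xb xbd \<gamma>1 \<gamma>2 \<gamma>3 \<gamma>4 \<gamma>5
    by (rule delay_minimizer.intro[OF tau A1_C1 A1_meas \<gamma> bounds xb_in xbd minimal])
  have weak: "has_weak_deriv_on a b momentum force" if "0 \<le> a" "b \<le> T" for a b
    using momentum_weak_derivative that .
  text \<open>On each of the three subintervals the zero extensions reduce to the stated functions.\<close>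
  show ?thesis
    by (intro conjI has_weak_deriv_on_cong[OF weak])
      (use tau in \<open>auto simp: momentum_def force_def zero_ext_def indicator_def\<close>)
qed

end
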